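(* Let $X_n^A$ be the metric space of normal-form games with player set $P=\{1,\dots,n\}$ and fixed finite action-profile set $A$, with metric $d$. Let $\vec\sigma$ be a mixed strategy profile over $A$ and let $C\subseteq X_n^A$ be a compact set such that $\vec\sigma$ is a non-degenerate Nash equilibrium of every $\Gamma\in C$. Then for every $\epsilon>0$ there exists $\delta>0$ such that $\vec\sigma$ is $(\epsilon,\delta)$-strongly punishable in every game $\Gamma\in C$.
   Context: A normal-form game with players $P=\{1,\dots,n\}$ and action profiles $A=A_1\times\cdots\times A_n$, $A_i=\{a_i^1,\dots,a_i^{N_i}\}$, is determined by utilities $u_i:A\to\mathbb R$, extended to mixed profiles by expectation; $\sigma_i^j$ is the probability $\sigma_i$ assigns to $a_i^j$ and $\sigma_i(A_i)$ its support. $d(\Gamma,\Gamma')=\max_{i,\vec a}|u_i(\vec a)-u'_i(\vec a)|$. A Nash equilibrium $\vec\sigma$ of $\Gamma$ is $(\epsilon,\delta)$-strongly punishable if for every game $\Gamma'$ with $d(\Gamma,\Gamma')<\delta$ there is a Nash equilibrium $\vec\sigma'$ of $\Gamma'$ with $\sigma'_i(A_i)=\sigma_i(A_i)$ and $u_i'(\vec\sigma')-u_i(\vec\sigma)<\epsilon$ for all $i$. Non-degeneracy: with actions labelled so that $\sigma_i(A_i)=\{a_i^1,\dots,a_i^{M_i}\}$, for variables $\vec p=(p_i^k)_{i\in P,k\le M_i}$ let $u_i(a,\vec p_{-i}):=\sum u_i(a,(a_j^{k_j})_{j\ne i})\prod_{j\neq i}p_j^{k_j}$ (sum over $k_j\le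 M_j$). The characteristic function $f_{\vec\sigma}$ has components $\sum_{k\le M_i}p_i^k$ ($i\in P$) and $u_i(a_i^1,\vec p_{-i})-u_i(a_i^k,\vec p_{-i})$ ($i\in P$, $2\le k\le M_i$); the residual function $r_{\vec\sigma}$ has components $u_i(a_i^1,\vec p_{-i})-u_i(a_i^k,\vec p_{-i})$ ($i\in P$, $M_i<k\le N_i$). $\vec\sigma$ is non-degenerate if $|Df_{\vec\sigma}(\vec\sigma)|\ne0$ and all components of $r_{\vec\sigma}(\vec\sigma)$ are strictly positive. *)

theory Defs
  imports "HOL-Analysis.Analysis"
begin

text \<open>Players are 0,...,n-1 (standing for 1,...,n). A game is a utility function u :: player => profile => real,
  normalised to be 0 outside the meaningful domain, so that the space of games
  X_n^A is a genuine metric space under the sup-distance d.\<close>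

type_synonym game = "nat \<Rightarrow> (nat \<Rightarrow> nat) \<Rightarrow> real"
type_synonym mixed = "nat \<Rightarrow> nat \<Rightarrow> real"

definition profiles :: "nat \<Rightarrow> (nat \<Rightarrow> nat) \<Rightarrow> (nat \<Rightarrow> nat) set" where
  "profiles n N = PiE {..<n} (\<lambda>i. {..<N i})"

definition games :: "nat \<Rightarrow> (nat \<Rightarrow> nat) \<Rightarrow> game set" where
  "games n N = {u. \<forall>i a. (i < n \<and> a \<in> profiles n N) \<or> u i a = 0}"

definition gdist :: "nat \<Rightarrow> (nat \<Rightarrow> nat) \<Rightarrow> game \<Rightarrow> game \<Rightarrow> real" where
  "gdist n N u v = Max {\<bar>u i a - v i a\<bar> | i a. i < n \<and> a \<in> profiles n N}"

lemma games_Metric_space: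
  assumes "1 \<le> n" "\<forall>i<n. 1 \<le> N i"
  shows "Metric_space (games n N) (gdist n N)"
proof -
  let ?S = "\<lambda>u v. {\<bar>u i a - v i a\<bar> | i a. i < n \<and> a \<in> profiles n N}"
  have fin: "finite (?S u v)" for u v
  proof -
    have "?S u v = (\<lambda>(i,a). \<bar>u i a - v i a\<bar>) ` ({..<n} \<times> profiles n N)" by auto
    moreover have "finite (profiles n N)" unfolding profiles_def by (simp add: finite_PiE)
    ultimately show ?thesis by simp
  qed
  have "profiles n N \<noteq> {}" unfolding profiles_def using assms(2) by (simp add: PiE_eq_empty_iff lessThan_empty_iff) (simp add: Suc_le_eq)
  then obtain a0 where a0: "a0 \<in> profiles n N" by blast
  have ne: "?S u v \<noteq> {}" for u v using a0 assms(1) by (auto intro!: exI[of _ 0])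
  have ge: "\<bar>u i a - v i a\<bar> \<le> gdist n N u v" if "i<n" "a\<in>profiles n N" for u v i a
    unfolding gdist_def using fin that by (intro Max_ge) auto
  have ex: "\<exists>i a. i<n \<and> a\<in>profiles n N \<and> gdist n N u v = \<bar>u i a - v i a\<bar>" for u v
    using Max_in[OF fin ne, of u v] unfolding gdist_def by auto
  show ?thesis
  proof
    fix x y show "0 \<le> gdist n N x y" using ex[of x y] by auto
  next
    fix x y show "gdist n N x y = gdist n N y x" unfolding gdist_def
      by (rule arg_cong[where f=Max]) (auto simp: abs_minus_commute)
  next
    fix x y assume xy: "x \<in> games n N" "y \<in> games n N"
    show "gdist n N x y = 0 \<longleftrightarrow> x = y"
    proof
      assume 0: "gdist n N x y = 0"
      show "x = y"
      proof (intro ext)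
        fix i a show "x i a = y i a"
        proof (cases "i < n \<and> a \<in> profiles n N")
          case True with ge[of i a x y] 0 show ?thesis by auto
        next
          case False then have "x i a = 0" "y i a = 0" using xy unfolding games_def by blast+ then show ?thesis by simp
        qed
      qed
    next
      assume "x = y" then show "gdist n N x y = 0" using ex[of x y] by auto
    qed
  next
    fix x y z
    obtain i a where "i<n" "a\<in>profiles n N" "gdist n N x z = \<bar>x i a - z i a\<bar>" using ex by blast
    moreover have "\<bar>x i a - z i a\<bar> \<le> \<bar>x i a - y i a\<bar> + \<bar>y i a - z i a\<bar>" by linarith
    ultimately show "gdist n N x z \<le> gdist n N x y + gdist n N y z"
      using ge[of i a x y] ge[of i a y z] by linarith
  qed
qed

definition mixed_strategy :: "(nat \<Rightarrow> nat) \<Rightarrow> nat \<Rightarrow> (nat \<Rightarrow> real) \<Rightarrow> bool" where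
  "mixed_strategy N i s \<longleftrightarrow> (\<forall>j<N i. 0 \<le> s j) \<and> (\<Sum>j<N i. s j) = 1"

definition mixed_profile :: "nat \<Rightarrow> (nat \<Rightarrow> nat) \<Rightarrow> mixed \<Rightarrow> bool" where
  "mixed_profile n N \<sigma> \<longleftrightarrow> (\<forall>i<n. mixed_strategy N i (\<sigma> i))"

definition support :: "(nat \<Rightarrow> nat) \<Rightarrow> mixed \<Rightarrow> nat \<Rightarrow> nat set" where
  "support N \<sigma> i = {j. j < N i \<and> 0 < \<sigma> i j}"

definition eu :: "nat \<Rightarrow> (nat \<Rightarrow> nat) \<Rightarrow> game \<Rightarrow> mixed \<Rightarrow> nat \<Rightarrow> real" where
  "eu n N u \<sigma> i = (\<Sum>a\<in>profiles n N. u i a * (\<Prod>j<n. \<sigma> j (a j)))"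

definition nash :: "nat \<Rightarrow> (nat \<Rightarrow> nat) \<Rightarrow> game \<Rightarrow> mixed \<Rightarrow> bool" where
  "nash n N u \<sigma> \<longleftrightarrow> mixed_profile n N \<sigma> \<and>
     (\<forall>i<n. \<forall>s. mixed_strategy N i s \<longrightarrow> eu n N u (\<sigma>(i := s)) i \<le> eu n N u \<sigma> i)"

definition strongly_punishable ::
  "nat \<Rightarrow> (nat \<Rightarrow> nat) \<Rightarrow> game \<Rightarrow> mixed \<Rightarrow> real \<Rightarrow> real \<Rightarrow> bool" where
  "strongly_punishable n N u \<sigma> \<epsilon> \<delta> \<longleftrightarrow> nash n N u \<sigma> \<and>
     (\<forall>u' \<in> games n N. gdist n N u u' < \<delta> \<longrightarrow>
        (\<exists>\<sigma>'. nash n N u' \<sigma>' \<and> (\<forall>i<n. support N \<sigma>' i = support N \<sigma> i) \<and>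
              (\<forall>i<n. eu n N u' \<sigma>' i - eu n N u \<sigma> i < \<epsilon>)))"

text \<open>The reference action a_i^1 of player i is the least action in the support
  (any choice of labelling gives the same non-degeneracy condition).\<close>
definition ref_action :: "(nat \<Rightarrow> nat) \<Rightarrow> mixed \<Rightarrow> nat \<Rightarrow> nat" where
  "ref_action N \<sigma> i = Min (support N \<sigma> i)"

definition var_index :: "nat \<Rightarrow> (nat \<Rightarrow> nat) \<Rightarrow> mixed \<Rightarrow> (nat \<times> nat) set" where
  "var_index n N \<sigma> = {(i, k). i < n \<and> k \<in> support N \<sigma> i}"

definition util_against ::
  "nat \<Rightarrow> (nat \<Rightarrow> nat) \<Rightarrow> game \<Rightarrow> mixed \<Rightarrow> nat \<Rightarrow> nat \<Rightarrow> (nat \<times> nat \<Rightarrow> real) \<Rightarrow> real" where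
  "util_against n N u \<sigma> i a p =
     (\<Sum>b\<in>PiE ({..<n} - {i}) (support N \<sigma>). u i (b(i := a)) * (\<Prod>j\<in>{..<n} - {i}. p (j, b j)))"

definition char_fun ::
  "nat \<Rightarrow> (nat \<Rightarrow> nat) \<Rightarrow> game \<Rightarrow> mixed \<Rightarrow> (nat \<times> nat \<Rightarrow> real) \<Rightarrow> nat \<times> nat \<Rightarrow> real" where
  "char_fun n N u \<sigma> p c = (case c of (i, k) \<Rightarrow>
     if k = ref_action N \<sigma> i then (\<Sum>l\<in>support N \<sigma> i. p (i, l))
     else util_against n N u \<sigma> i (ref_action N \<sigma> i) p - util_against n N u \<sigma> i k p)"

definition jacobian ::
  "((nat \<times> nat \<Rightarrow> real) \<Rightarrow> nat \<times> nat \<Rightarrow> real) \<Rightarrow> (nat \<times> nat \<Rightarrow> real) \<Rightarrow> nat \<times> nat \<Rightarrow> nat \<times> nat \<Rightarrow> real" where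
  "jacobian f p c v = deriv (\<lambda>t. f (p(v := t)) c) (p v)"

definition det_on :: "'a set \<Rightarrow> ('a \<Rightarrow> 'a \<Rightarrow> real) \<Rightarrow> real" where
  "det_on I M = (\<Sum>\<pi> | \<pi> permutes I. of_int (sign \<pi>) * (\<Prod>x\<in>I. M x (\<pi> x)))"

definition non_degenerate :: "nat \<Rightarrow> (nat \<Rightarrow> nat) \<Rightarrow> game \<Rightarrow> mixed \<Rightarrow> bool" where
  "non_degenerate n N u \<sigma> \<longleftrightarrow>
     det_on (var_index n N \<sigma>)
        (jacobian (char_fun n N u \<sigma>) (\<lambda>(i, k). \<sigma> i k)) \<noteq> 0 \<and>
     (\<forall>i<n. \<forall>k<N i. k \<notin> support N \<sigma> i \<longrightarrow>
        0 < util_against n N u \<sigma> i (ref_action N \<sigma> i) (\<lambda>(j, l). \<sigma> j l)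
            - util_against n N u \<sigma> i k (\<lambda>(j, l). \<sigma> j l))"

end

theory Submission
  imports Defs "Jordan_Normal_Form.Determinant"
begin

text \<open>Write \<open>f\<^sub>u\<close> for the characteristic function of \<open>\<sigma>\<close> in the game \<open>u\<close>. Its components are
  multiaffine in the variables \<open>p\<close>, so partial derivatives are finite differences, and
  non-degeneracy says that the Jacobian \<open>A\<close> of \<open>f\<^sub>u\<close> at \<open>\<sigma>\<close> is invertible. For every game \<open>w\<close>
  close to \<open>u\<close> the Newton map \<open>p \<mapsto> p - A\<inverse> (f\<^sub>w p - f\<^sub>u \<sigma>)\<close> is then a contraction near \<open>\<sigma>\<close>, with
  constants depending only on \<open>u\<close>; its fixed point \<open>p\<close> is a mixed profile with the support of \<open>\<sigma>\<close>
  that makes every player indifferent on that support. For \<open>w\<close> near \<open>u\<close> and \<open>p\<close> near \<open>\<sigma>\<close> the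
  strict inequalities of the residual function persist, so \<open>p\<close> is a Nash equilibrium of \<open>w\<close> whose
  payoffs are close to those of \<open>\<sigma>\<close> in \<open>u\<close>. Compactness of \<open>C\<close> makes the radius uniform.\<close>

definition multiaffine :: "(('a \<Rightarrow> real) \<Rightarrow> real) \<Rightarrow> bool" where
  "multiaffine \<Phi> \<longleftrightarrow>
     (\<forall>p v t. \<Phi> (p(v := t)) = \<Phi> (p(v := 0)) + t * (\<Phi> (p(v := 1)) - \<Phi> (p(v := 0))))"

lemma multiaffineD:
  "multiaffine \<Phi> \<Longrightarrow> \<Phi> (p(v := t)) = \<Phi> (p(v := 0)) + t * (\<Phi> (p(v := 1)) - \<Phi> (p(v := 0)))"
  unfolding multiaffine_def by blast

lemma multiaffine_diff:
  assumes "multiaffine f" and "multiaffine g"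
  shows "multiaffine (\<lambda>p. f p - g p)"
  unfolding multiaffine_def
proof (intro allI)
  fix p v t
  show "f (p(v := t)) - g (p(v := t)) = f (p(v := 0)) - g (p(v := 0)) +
      t * (f (p(v := 1)) - g (p(v := 1)) - (f (p(v := 0)) - g (p(v := 0))))"
    unfolding multiaffineD[OF assms(1), of p v t] multiaffineD[OF assms(2), of p v t]
    by (simp add: algebra_simps)
qed

lemma multiaffine_sum:
  assumes "\<And>x. x \<in> A \<Longrightarrow> multiaffine (f x)"
  shows "multiaffine (\<lambda>p. \<Sum>x\<in>A. c x * f x p)"
  unfolding multiaffine_def
proof (intro allI)
  fix p v t
  have "(\<Sum>x\<in>A. c x * f x (p(v := t))) =
      (\<Sum>x\<in>A. c x * f x (p(v := 0)) + t * (c x * f x (p(v := 1)) - c x * f x (p(v := 0))))"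
  proof (intro sum.cong refl)
    fix x assume "x \<in> A"
    show "c x * f x (p(v := t)) = c x * f x (p(v := 0)) + t * (c x * f x (p(v := 1)) - c x * f x (p(v := 0)))"
      unfolding multiaffineD[OF assms[OF \<open>x \<in> A\<close>], of p v t] by (simp add: algebra_simps)
  qed
  then show "(\<Sum>x\<in>A. c x * f x (p(v := t))) = (\<Sum>x\<in>A. c x * f x (p(v := 0))) +
      t * ((\<Sum>x\<in>A. c x * f x (p(v := 1))) - (\<Sum>x\<in>A. c x * f x (p(v := 0))))"
    by (simp add: sum.distrib sum_subtractf flip: sum_distrib_left)
qed

lemma multiaffine_coordinate: "multiaffine (\<lambda>p. p x)"
  unfolding multiaffine_def by simp

lemma multiaffine_prod:
  assumes "finite J" and "inj_on g J"
  shows "multiaffine (\<lambda>p. \<Prod>j\<in>J. p (g j))"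
  unfolding multiaffine_def
proof (intro allI)
  fix p v and t :: real
  show "(\<Prod>j\<in>J. (p(v := t)) (g j)) = (\<Prod>j\<in>J. (p(v := 0)) (g j))
      + t * ((\<Prod>j\<in>J. (p(v := 1)) (g j)) - (\<Prod>j\<in>J. (p(v := 0)) (g j)))"
  proof (cases "v \<in> g ` J")
    case True
    then obtain j0 where j0: "j0 \<in> J" "g j0 = v" by blast
    have "(\<Prod>j\<in>J. (p(v := s)) (g j)) = s * (\<Prod>j\<in>J - {j0}. p (g j))" for s
    proof -
      have "(\<Prod>j\<in>J - {j0}. (p(v := s)) (g j)) = (\<Prod>j\<in>J - {j0}. p (g j))"
        using j0 assms(2) by (intro prod.cong) (auto dest: inj_onD)
      then show ?thesis using prod.remove[OF assms(1) j0(1), of "\<lambda>j. (p(v := s)) (g j)"] j0(2) by simp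
    qed
    then show ?thesis by simp
  next
    case False
    then have "(\<Prod>j\<in>J. (p(v := s)) (g j)) = (\<Prod>j\<in>J. p (g j))" for s
      by (intro prod.cong) auto
    then show ?thesis by simp
  qed
qed

lemma multiaffine_deriv:
  assumes "multiaffine \<Phi>"
  shows "deriv (\<lambda>t. \<Phi> (p(v := t))) x = \<Phi> (p(v := 1)) - \<Phi> (p(v := 0))"
proof -
  have "(\<lambda>t. \<Phi> (p(v := t))) = (\<lambda>t. \<Phi> (p(v := 0)) + t * (\<Phi> (p(v := 1)) - \<Phi> (p(v := 0))))"
    using multiaffineD[OF assms] by blast
  moreover have "((\<lambda>t. \<Phi> (p(v := 0)) + t * (\<Phi> (p(v := 1)) - \<Phi> (p(v := 0)))) has_real_derivative
      \<Phi> (p(v := 1)) - \<Phi> (p(v := 0))) (at x)"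
    by (auto intro!: derivative_eq_intros)
  ultimately show ?thesis by (simp add: DERIV_imp_deriv)
qed

text \<open>Change the coordinates of \<open>q\<close> in \<open>W\<close> one at a time into those of \<open>p\<close>; \<open>z v\<close> is the
  point of this path at which coordinate \<open>v\<close> is changed.\<close>
lemma multiaffine_telescope:
  assumes "multiaffine \<Phi>" and "finite W" and "\<forall>x. x \<notin> W \<longrightarrow> p x = q x"
  shows "\<exists>z. (\<forall>v x. z v x = p x \<or> z v x = q x) \<and>
     \<Phi> p - \<Phi> q = (\<Sum>v\<in>W. (p v - q v) * (\<Phi> ((z v)(v := 1)) - \<Phi> ((z v)(v := 0))))"
  using assms(2,3)
proof (induction W arbitrary: p rule: finite_induct)
  case empty
  then have "p = q" by auto
  then show ?case by auto
next
  case (insert v W)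
  define p' where "p' = p(v := q v)"
  have "\<forall>x. x \<notin> W \<longrightarrow> p' x = q x" using insert.prems by (auto simp: p'_def)
  from insert.IH[OF this] obtain z' where z': "\<forall>w x. z' w x = p' x \<or> z' w x = q x"
    and eq: "\<Phi> p' - \<Phi> q = (\<Sum>w\<in>W. (p' w - q w) * (\<Phi> ((z' w)(w := 1)) - \<Phi> ((z' w)(w := 0))))"
    by blast
  define z where "z = z'(v := p)"
  have step: "\<Phi> p - \<Phi> p' = (p v - q v) * (\<Phi> ((z v)(v := 1)) - \<Phi> ((z v)(v := 0)))"
    using multiaffineD[OF assms(1), of p v "p v"] multiaffineD[OF assms(1), of p v "q v"]
    by (simp add: z_def p'_def algebra_simps)
  have rest: "(\<Sum>w\<in>W. (p' w - q w) * (\<Phi> ((z' w)(w := 1)) - \<Phi> ((z' w)(w := 0))))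
      = (\<Sum>w\<in>W. (p w - q w) * (\<Phi> ((z w)(w := 1)) - \<Phi> ((z w)(w := 0))))"
    using insert.hyps by (intro sum.cong) (auto simp: p'_def z_def)
  have "\<Phi> p - \<Phi> q = (\<Sum>w\<in>insert v W. (p w - q w) * (\<Phi> ((z w)(w := 1)) - \<Phi> ((z w)(w := 0))))"
    using eq insert.hyps step rest by simp
  moreover have "z w x = p x \<or> z w x = q x" for w x
    using z'[rule_format, of w x] by (cases "w = v"; cases "x = v") (auto simp: z_def p'_def)
  ultimately show ?case by blast
qed

lemma multiaffine_linearization_error:
  assumes "multiaffine \<Phi>" and "finite V" and "\<forall>x. x \<notin> V \<longrightarrow> p x = q x"
    and "\<And>z v. \<forall>x. z x = p x \<or> z x = q x \<Longrightarrow> v \<in> V \<Longrightarrow>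
           \<bar>\<Phi> (z(v := 1)) - \<Phi> (z(v := 0)) - a v\<bar> \<le> \<kappa>"
  shows "\<bar>\<Phi> p - \<Phi> q - (\<Sum>v\<in>V. a v * (p v - q v))\<bar> \<le> \<kappa> * (\<Sum>v\<in>V. \<bar>p v - q v\<bar>)"
proof -
  obtain z where z: "\<forall>v x. z v x = p x \<or> z v x = q x"
    and eq: "\<Phi> p - \<Phi> q = (\<Sum>v\<in>V. (p v - q v) * (\<Phi> ((z v)(v := 1)) - \<Phi> ((z v)(v := 0))))"
    using multiaffine_telescope[OF assms(1-3)] by blast
  have "\<Phi> p - \<Phi> q - (\<Sum>v\<in>V. a v * (p v - q v)) =
      (\<Sum>v\<in>V. (p v - q v) * (\<Phi> ((z v)(v := 1)) - \<Phi> ((z v)(v := 0)) - a v))"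
    unfolding eq by (simp add: sum_subtractf[symmetric] algebra_simps)
  also have "\<bar>\<dots>\<bar> \<le> (\<Sum>v\<in>V. \<bar>p v - q v\<bar> * \<kappa>)"
    using assms(4) z by (intro sum_abs[THEN order_trans] sum_mono) (auto simp: abs_mult mult_left_mono)
  finally show ?thesis by (simp add: sum_distrib_left mult.commute)
qed

lemma sum_abs_matrix_vector_le:
  fixes B :: "'a \<Rightarrow> 'a \<Rightarrow> real"
  assumes "finite V"
  shows "(\<Sum>x\<in>V. \<bar>\<Sum>c\<in>V. B x c * y c\<bar>) \<le> (\<Sum>x\<in>V. \<Sum>c\<in>V. \<bar>B x c\<bar>) * (\<Sum>c\<in>V. \<bar>y c\<bar>)"
proof -
  have "\<bar>\<Sum>c\<in>V. B x c * y c\<bar> \<le> (\<Sum>c\<in>V. \<bar>B x c\<bar> * (\<Sum>c\<in>V. \<bar>y c\<bar>))" for x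
  proof -
    have "\<bar>y c\<bar> \<le> (\<Sum>c\<in>V. \<bar>y c\<bar>)" if "c \<in> V" for c
      using assms that by (intro member_le_sum) auto
    then show ?thesis
      by (intro sum_abs[THEN order_trans] sum_mono) (simp add: abs_mult mult_left_mono)
  qed
  then have "(\<Sum>x\<in>V. \<bar>\<Sum>c\<in>V. B x c * y c\<bar>) \<le> (\<Sum>x\<in>V. \<Sum>c\<in>V. \<bar>B x c\<bar> * (\<Sum>c\<in>V. \<bar>y c\<bar>))"
    by (rule sum_mono)
  then show ?thesis by (simp add: sum_distrib_right)
qed

definition matrix_inverse_on :: "'a set \<Rightarrow> ('a \<Rightarrow> 'a \<Rightarrow> real) \<Rightarrow> ('a \<Rightarrow> 'a \<Rightarrow> real) \<Rightarrow> bool" where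
  "matrix_inverse_on V A B \<longleftrightarrow> (\<forall>c\<in>V. \<forall>d\<in>V.
     (\<Sum>v\<in>V. A c v * B v d) = (if c = d then 1 else 0) \<and> (\<Sum>v\<in>V. B c v * A v d) = (if c = d then 1 else 0))"

lemma matrix_inverse_on_commute: "matrix_inverse_on V A B \<longleftrightarrow> matrix_inverse_on V B A"
  unfolding matrix_inverse_on_def by blast

lemma matrix_inverse_on_apply:
  assumes "matrix_inverse_on V A B" and "finite V" and "x \<in> V"
  shows "(\<Sum>c\<in>V. B x c * (\<Sum>v\<in>V. A c v * y v)) = y x"
proof -
  have "(\<Sum>c\<in>V. B x c * (\<Sum>v\<in>V. A c v * y v)) = (\<Sum>c\<in>V. \<Sum>v\<in>V. B x c * A c v * y v)"
    by (simp add: sum_distrib_left mult.assoc)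
  also have "\<dots> = (\<Sum>v\<in>V. (\<Sum>c\<in>V. B x c * A c v) * y v)"
    by (subst sum.swap) (simp add: sum_distrib_right)
  also have "\<dots> = (\<Sum>v\<in>V. (if x = v then y v else 0))"
    using assms(1,3) by (intro sum.cong) (auto simp: matrix_inverse_on_def)
  finally show ?thesis using assms(2,3) by simp
qed

lemma det_on_reindex:
  fixes A :: "'a \<Rightarrow> 'a \<Rightarrow> real"
  assumes e: "bij_betw e {0..<m} V"
  shows "det_on V A = Determinant.det (Matrix.mat m m (\<lambda>(a, b). A (e a) (e b)))"
proof -
  let ?M = "Matrix.mat m m (\<lambda>(a, b). A (e a) (e b))"
  let ?ie = "inv_into {0..<m} e"
  let ?lift = "map_permutation {0..<m} e"
  have inj: "inj_on e {0..<m}" using e by (simp add: bij_betw_def)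
  have ie: "bij_betw ?ie V {0..<m}" using e by (rule bij_betw_inv_into)
  have e_ie: "\<And>x. x \<in> V \<Longrightarrow> e (?ie x) = x" using e by (simp add: bij_betw_def f_inv_into_f)
  have ie_e: "\<And>a. a \<in> {0..<m} \<Longrightarrow> ?ie (e a) = a" using inj by (simp add: inv_into_f_f)
  have lift: "bij_betw ?lift {q. q permutes {0..<m}} {p. p permutes V}"
  proof (rule bij_betw_byWitness[where f' = "map_permutation V ?ie"])
    show "\<forall>q\<in>{q. q permutes {0..<m}}. map_permutation V ?ie (?lift q) = q"
      using map_permutation_compose_inv[OF e _ ie_e] by auto
    show "\<forall>p\<in>{p. p permutes V}. ?lift (map_permutation V ?ie p) = p"
      using map_permutation_compose_inv[OF ie _ e_ie] by auto
    show "?lift ` {q. q permutes {0..<m}} \<subseteq> {p. p permutes V}"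
      using map_permutation_permutes[OF e] by auto
    show "map_permutation V ?ie ` {p. p permutes V} \<subseteq> {q. q permutes {0..<m}}"
      using map_permutation_permutes[OF ie] by auto
  qed
  have lifted_term: "of_int (sign q) * (\<Prod>a = 0..<m. ?M $$ (a, q a)) =
      of_int (sign (?lift q)) * (\<Prod>x\<in>V. A x (?lift q x))" if q: "q permutes {0..<m}" for q
  proof -
    have "(\<Prod>x\<in>V. A x (?lift q x)) = (\<Prod>a\<in>{0..<m}. A (e a) (?lift q (e a)))"
      by (rule prod.reindex_bij_betw[OF e, symmetric])
    also have "\<dots> = (\<Prod>a\<in>{0..<m}. ?M $$ (a, q a))"
      using q map_permutation_apply[OF inj] by (intro prod.cong refl) (simp add: permutes_in_image)
    finally show ?thesis
      using sign_map_permutation[OF inj q] by simp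
  qed
  have "Determinant.det ?M = (\<Sum>q | q permutes {0..<m}. of_int (sign q) * (\<Prod>a = 0..<m. ?M $$ (a, q a)))"
    by (rule det_def'[OF mat_carrier])
  also have "\<dots> = (\<Sum>q | q permutes {0..<m}. of_int (sign (?lift q)) * (\<Prod>x\<in>V. A x (?lift q x)))"
    using lifted_term by (intro sum.cong) auto
  also have "\<dots> = (\<Sum>p | p permutes V. of_int (sign p) * (\<Prod>x\<in>V. A x (p x)))"
    by (rule sum.reindex_bij_betw[OF lift])
  finally show ?thesis unfolding det_on_def by simp
qed

lemma det_on_nonzero_imp_inverse:
  fixes A :: "'a \<Rightarrow> 'a \<Rightarrow> real"
  assumes "finite V" and "det_on V A \<noteq> 0"
  obtains B where "matrix_inverse_on V A B"
proof -
  define m where "m = card V"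
  obtain e where e: "bij_betw e {0..<m} V"
    using ex_bij_betw_nat_finite[OF assms(1)] unfolding m_def by blast
  define ie where "ie = inv_into {0..<m} e"
  have ie: "bij_betw ie V {0..<m}" unfolding ie_def using e by (rule bij_betw_inv_into)
  have e_ie: "x \<in> V \<Longrightarrow> e (ie x) = x" for x
    using e unfolding ie_def by (simp add: bij_betw_def f_inv_into_f)
  have ie_less: "x \<in> V \<Longrightarrow> ie x < m" for x
    using ie by (auto simp: bij_betw_def)
  have ie_eq: "c \<in> V \<Longrightarrow> d \<in> V \<Longrightarrow> ie c = ie d \<longleftrightarrow> c = d" for c d
    using e_ie by metis
  define M where "M = Matrix.mat m m (\<lambda>(a, b). A (e a) (e b))"
  have M: "M \<in> carrier_mat m m" unfolding M_def by simp
  have detM: "Determinant.det M = det_on V A"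
    unfolding M_def by (rule det_on_reindex[OF e, symmetric])
  define D where "D = adj_mat M"
  have D: "D \<in> carrier_mat m m" "M * D = Determinant.det M \<cdot>\<^sub>m 1\<^sub>m m" "D * M = Determinant.det M \<cdot>\<^sub>m 1\<^sub>m m"
    using adj_mat[OF M] unfolding D_def by auto
  have A_eq: "A c d = M $$ (ie c, ie d)" if "c \<in> V" "d \<in> V" for c d
    using that ie_less e_ie unfolding M_def by simp
  have product: "(\<Sum>v\<in>V. X $$ (ie c, ie v) * Y $$ (ie v, ie d)) = (X * Y) $$ (ie c, ie d)"
    if "X \<in> carrier_mat m m" "Y \<in> carrier_mat m m" "c \<in> V" "d \<in> V" for X Y c d
    using that ie_less sum.reindex_bij_betw[OF ie, of "\<lambda>k. X $$ (ie c, k) * Y $$ (k, ie d)"]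
    by (simp add: scalar_prod_def atLeast0LessThan)
  have unit: "(Determinant.det M \<cdot>\<^sub>m 1\<^sub>m m) $$ (ie c, ie d) / det_on V A = (if c = d then 1 else 0)"
    if "c \<in> V" "d \<in> V" for c d
    using that ie_less ie_eq assms(2) detM by simp
  show thesis
  proof (rule that[of "\<lambda>c d. D $$ (ie c, ie d) / det_on V A"])
    show "matrix_inverse_on V A (\<lambda>c d. D $$ (ie c, ie d) / det_on V A)"
      unfolding matrix_inverse_on_def
      using product[OF M D(1)] product[OF D(1) M] D(2,3) unit A_eq
      by (simp add: sum_divide_distrib[symmetric] mult.assoc[symmetric] times_divide_eq_right)
  qed
qed

definition l1_dist :: "'a set \<Rightarrow> ('a \<Rightarrow> real) \<Rightarrow> ('a \<Rightarrow> real) \<Rightarrow> real" where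
  "l1_dist V p q = (\<Sum>x\<in>V. \<bar>p x - q x\<bar>)"

lemma l1_dist_component_le: "finite V \<Longrightarrow> x \<in> V \<Longrightarrow> \<bar>p x - q x\<bar> \<le> l1_dist V p q"
  unfolding l1_dist_def by (intro member_le_sum) auto

lemma Metric_space_l1_dist:
  assumes "finite V"
  shows "Metric_space (extensional V) (l1_dist V)"
proof
  fix p q r
  show "0 \<le> l1_dist V p q" unfolding l1_dist_def by (intro sum_nonneg) auto
  show "l1_dist V p q = l1_dist V q p" unfolding l1_dist_def by (simp add: abs_minus_commute)
  show "l1_dist V p r \<le> l1_dist V p q + l1_dist V q r"
    unfolding l1_dist_def sum.distrib[symmetric] by (intro sum_mono) auto
  assume pq: "p \<in> extensional V" "q \<in> extensional V"
  show "l1_dist V p q = 0 \<longleftrightarrow> p = q"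
  proof
    assume "l1_dist V p q = 0"
    then have "\<forall>x\<in>V. p x = q x"
      using assms by (simp add: l1_dist_def sum_nonneg_eq_0_iff)
    then show "p = q" using pq by (intro extensionalityI) auto
  qed (simp add: l1_dist_def)
qed

lemma mcomplete_l1_dist:
  assumes "finite V"
  shows "Metric_space.mcomplete (extensional V) (l1_dist V)"
proof -
  interpret l1: Metric_space "extensional V" "l1_dist V" by (rule Metric_space_l1_dist[OF assms])
  show ?thesis
    unfolding l1.mcomplete_def
  proof (intro allI impI)
    fix s assume s: "l1.MCauchy s"
    have "Cauchy (\<lambda>k. s k x)" if "x \<in> V" for x
    proof (rule metric_CauchyI)
      fix e :: real assume "e > 0"
      then obtain K where K: "\<forall>k k'. K \<le> k \<longrightarrow> K \<le> k' \<longrightarrow> l1_dist V (s k) (s k') < e"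
        using s unfolding l1.MCauchy_def by meson
      show "\<exists>K. \<forall>k\<ge>K. \<forall>k'\<ge>K. dist (s k x) (s k' x) < e"
      proof (intro exI allI impI)
        fix k k' assume "K \<le> k" "K \<le> k'"
        then show "dist (s k x) (s k' x) < e"
          using K l1_dist_component_le[OF assms that, of "s k" "s k'"] unfolding dist_real_def by fastforce
      qed
    qed
    then have "(\<lambda>k. s k x) \<longlonglongrightarrow> lim (\<lambda>k. s k x)" if "x \<in> V" for x
      using that by (simp add: Cauchy_convergent_iff convergent_LIMSEQ_iff)
    define L where "L = restrict (\<lambda>x. lim (\<lambda>k. s k x)) V"
    have "(\<lambda>k. s k x) \<longlonglongrightarrow> L x" if "x \<in> V" for x
      using that \<open>_ \<Longrightarrow> _ \<longlonglongrightarrow> _\<close> by (simp add: L_def)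
    then have "(\<lambda>k. \<Sum>x\<in>V. \<bar>s k x - L x\<bar>) \<longlonglongrightarrow> (\<Sum>x\<in>V. \<bar>L x - L x\<bar>)"
      by (intro tendsto_intros)
    then have "(\<lambda>k. l1_dist V (s k) L) \<longlonglongrightarrow> 0"
      by (simp add: l1_dist_def)
    moreover have "L \<in> extensional V" by (simp add: L_def)
    ultimately show "\<exists>L. limitin l1.mtopology s L sequentially"
      using s unfolding l1.MCauchy_def l1.limitin_metric_dist_null
      by (intro exI[of _ L] conjI always_eventually allI) auto
  qed
qed

lemma l1_mcball_contraction_fixpoint:
  assumes "finite V" and "q0 \<in> extensional V" and "0 \<le> \<rho>"
    and maps: "\<And>p. p \<in> extensional V \<Longrightarrow> l1_dist V q0 p \<le> \<rho> \<Longrightarrow>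
      T p \<in> extensional V \<and> l1_dist V q0 (T p) \<le> \<rho>"
    and contraction: "\<And>p q. p \<in> extensional V \<Longrightarrow> l1_dist V q0 p \<le> \<rho> \<Longrightarrow>
      q \<in> extensional V \<Longrightarrow> l1_dist V q0 q \<le> \<rho> \<Longrightarrow> l1_dist V (T p) (T q) \<le> 1/2 * l1_dist V p q"
  obtains p where "p \<in> extensional V" and "l1_dist V q0 p \<le> \<rho>" and "T p = p"
proof -
  interpret l1: Metric_space "extensional V" "l1_dist V" by (rule Metric_space_l1_dist[OF assms(1)])
  interpret ball: Submetric "extensional V" "l1_dist V" "l1.mcball q0 \<rho>"
    by unfold_locales (rule l1.mcball_subset_mspace)
  have "ball.sub.mcomplete"
    by (rule ball.closedin_mcomplete_imp_mcomplete[OF l1.closedin_mcball mcomplete_l1_dist[OF assms(1)]])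
  moreover have "l1.mcball q0 \<rho> \<noteq> {}" using assms(2,3) l1.centre_in_mcball_iff by blast
  moreover have "T \<in> l1.mcball q0 \<rho> \<rightarrow> l1.mcball q0 \<rho>" using maps assms(2) by auto
  ultimately obtain p where "p \<in> l1.mcball q0 \<rho>" "T p = p"
    using ball.sub.Banach_fixedpoint_thm[of T "1/2"] contraction by auto
  then show thesis using that by auto
qed

definition newton_step ::
  "'a set \<Rightarrow> ('a \<Rightarrow> 'a \<Rightarrow> real) \<Rightarrow> (('a \<Rightarrow> real) \<Rightarrow> 'a \<Rightarrow> real) \<Rightarrow> ('a \<Rightarrow> real) \<Rightarrow> ('a \<Rightarrow> real) \<Rightarrow> 'a \<Rightarrow> real"
  where "newton_step V B G y p = restrict (\<lambda>x. p x - (\<Sum>c\<in>V. B x c * (G p c - y c))) V"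

lemma l1_dist_newton_step_le:
  assumes "finite V"
  shows "l1_dist V p (newton_step V B G y p) \<le> (\<Sum>x\<in>V. \<Sum>c\<in>V. \<bar>B x c\<bar>) * (\<Sum>c\<in>V. \<bar>G p c - y c\<bar>)"
proof -
  have "l1_dist V p (newton_step V B G y p) = (\<Sum>x\<in>V. \<bar>\<Sum>c\<in>V. B x c * (G p c - y c)\<bar>)"
    unfolding l1_dist_def newton_step_def by (intro sum.cong) auto
  also have "\<dots> \<le> (\<Sum>x\<in>V. \<Sum>c\<in>V. \<bar>B x c\<bar>) * (\<Sum>c\<in>V. \<bar>G p c - y c\<bar>)"
    by (rule sum_abs_matrix_vector_le[OF assms])
  finally show ?thesis .
qed

text \<open>The linearization error of \<open>G\<close> along \<open>q \<rightarrow> p\<close> is \<open>\<kappa>\<close>-small per coordinate, and \<open>B\<close>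
  undoes the linear part exactly.\<close>
lemma newton_step_contraction:
  fixes G :: "('a \<Rightarrow> real) \<Rightarrow> 'a \<Rightarrow> real"
  assumes fin: "finite V" and affine: "\<And>c. c \<in> V \<Longrightarrow> multiaffine (\<lambda>p. G p c)"
    and inv: "matrix_inverse_on V A B" and "p \<in> extensional V" and "q \<in> extensional V"
    and jac: "\<And>z c v. \<forall>x. z x = p x \<or> z x = q x \<Longrightarrow> c \<in> V \<Longrightarrow> v \<in> V \<Longrightarrow>
               \<bar>G (z(v := 1)) c - G (z(v := 0)) c - A c v\<bar> \<le> \<kappa>"
  shows "l1_dist V (newton_step V B G y p) (newton_step V B G y q) \<le>
    (\<Sum>x\<in>V. \<Sum>c\<in>V. \<bar>B x c\<bar>) * card V * \<kappa> * l1_dist V p q"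
proof -
  define \<beta> where "\<beta> = (\<Sum>x\<in>V. \<Sum>c\<in>V. \<bar>B x c\<bar>)"
  have "0 \<le> \<beta>" unfolding \<beta>_def by (intro sum_nonneg) auto
  define E where "E c = G p c - G q c - (\<Sum>v\<in>V. A c v * (p v - q v))" for c
  have agree: "\<forall>x. x \<notin> V \<longrightarrow> p x = q x"
    using assms(4,5) by (simp add: extensional_def)
  have E: "\<bar>E c\<bar> \<le> \<kappa> * l1_dist V p q" if "c \<in> V" for c
    unfolding E_def l1_dist_def
    by (rule multiaffine_linearization_error[OF affine[OF that] fin agree]) (blast intro: jac that)
  have diff: "newton_step V B G y p x - newton_step V B G y q x = - (\<Sum>c\<in>V. B x c * E c)"
    if "x \<in> V" for x
  proof -
    have "(\<Sum>c\<in>V. B x c * (\<Sum>v\<in>V. A c v * (p v - q v))) = p x - q x"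
      by (rule matrix_inverse_on_apply[OF inv fin that])
    then show ?thesis
      using that by (simp add: newton_step_def E_def right_diff_distrib sum_subtractf)
  qed
  have "l1_dist V (newton_step V B G y p) (newton_step V B G y q) = (\<Sum>x\<in>V. \<bar>\<Sum>c\<in>V. B x c * E c\<bar>)"
    unfolding l1_dist_def using diff by (intro sum.cong) auto
  also have "\<dots> \<le> \<beta> * (\<Sum>c\<in>V. \<bar>E c\<bar>)"
    unfolding \<beta>_def by (rule sum_abs_matrix_vector_le[OF fin])
  also have "\<dots> \<le> \<beta> * (card V * (\<kappa> * l1_dist V p q))"
    using E \<open>0 \<le> \<beta>\<close> by (intro mult_left_mono sum_bounded_above) auto
  finally show ?thesis by (simp add: \<beta>_def mult.assoc)
qed

text \<open>\<open>newton_step\<close> is a \<open>1/2\<close>-contraction of the closed \<open>\<rho>\<close>-ball around \<open>p0\<close> in the \<open>\<ell>\<^sub>1\<close>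
  metric; its fixed point is the solution.\<close>
lemma multiaffine_newton:
  fixes G :: "('a \<Rightarrow> real) \<Rightarrow> 'a \<Rightarrow> real"
  assumes fin: "finite V"
    and local: "\<And>p q c. c \<in> V \<Longrightarrow> \<forall>x\<in>V. p x = q x \<Longrightarrow> G p c = G q c"
    and affine: "\<And>c. c \<in> V \<Longrightarrow> multiaffine (\<lambda>p. G p c)"
    and inv: "matrix_inverse_on V A B"
    and "0 < \<rho>"
    and jac: "\<And>z c v. \<forall>x\<in>V. \<bar>z x - p0 x\<bar> \<le> \<rho> \<Longrightarrow> c \<in> V \<Longrightarrow> v \<in> V \<Longrightarrow>
               \<bar>G (z(v := 1)) c - G (z(v := 0)) c - A c v\<bar> \<le> \<kappa>"
    and small: "(\<Sum>x\<in>V. \<Sum>c\<in>V. \<bar>B x c\<bar>) * card V * \<kappa> \<le> 1/2"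
    and start: "(\<Sum>x\<in>V. \<Sum>c\<in>V. \<bar>B x c\<bar>) * (\<Sum>c\<in>V. \<bar>G p0 c - y c\<bar>) \<le> \<rho>/2"
  shows "\<exists>p. (\<forall>x\<in>V. \<bar>p x - p0 x\<bar> \<le> \<rho>) \<and> (\<forall>c\<in>V. G p c = y c)"
proof -
  define T where "T = newton_step V B G y"
  define q0 where "q0 = restrict p0 V"
  have in_ball: "\<bar>p x - p0 x\<bar> \<le> \<rho>" if "l1_dist V q0 p \<le> \<rho>" "x \<in> V" for p x
    using that l1_dist_component_le[OF fin \<open>x \<in> V\<close>, of q0 p] by (simp add: q0_def abs_minus_commute)
  have contraction: "l1_dist V (T p) (T q) \<le> 1/2 * l1_dist V p q"
    if "p \<in> extensional V" "l1_dist V q0 p \<le> \<rho>" "q \<in> extensional V" "l1_dist V q0 q \<le> \<rho>" for p q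
  proof -
    have "\<bar>G (z(v := 1)) c - G (z(v := 0)) c - A c v\<bar> \<le> \<kappa>"
      if "\<forall>x. z x = p x \<or> z x = q x" "c \<in> V" "v \<in> V" for z c v
    proof -
      have "\<forall>x\<in>V. \<bar>z x - p0 x\<bar> \<le> \<rho>"
        using that(1) in_ball[OF \<open>l1_dist V q0 p \<le> \<rho>\<close>] in_ball[OF \<open>l1_dist V q0 q \<le> \<rho>\<close>] by metis
      then show ?thesis using jac that(2,3) by blast
    qed
    then have "l1_dist V (T p) (T q) \<le> (\<Sum>x\<in>V. \<Sum>c\<in>V. \<bar>B x c\<bar>) * card V * \<kappa> * l1_dist V p q"
      unfolding T_def using that by (intro newton_step_contraction[OF fin affine inv]) auto
    also have "\<dots> \<le> 1/2 * l1_dist V p q"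
      using small by (intro mult_right_mono) (simp_all add: l1_dist_def sum_nonneg)
    finally show ?thesis .
  qed
  have "(\<Sum>c\<in>V. \<bar>G q0 c - y c\<bar>) = (\<Sum>c\<in>V. \<bar>G p0 c - y c\<bar>)"
    using local[of _ q0 p0] by (intro sum.cong) (auto simp: q0_def)
  then have T_q0: "l1_dist V q0 (T q0) \<le> \<rho>/2"
    using l1_dist_newton_step_le[OF fin, of q0 B G y] start by (simp add: T_def)
  have q0: "q0 \<in> extensional V" "l1_dist V q0 q0 \<le> \<rho>"
    using \<open>0 < \<rho>\<close> by (simp_all add: q0_def l1_dist_def)
  obtain p where "l1_dist V q0 p \<le> \<rho>" and "T p = p"
  proof (rule l1_mcball_contraction_fixpoint[OF fin q0(1) _ _ contraction])
    show "0 \<le> \<rho>" using \<open>0 < \<rho>\<close> by simp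
    fix p assume p: "p \<in> extensional V" "l1_dist V q0 p \<le> \<rho>"
    have "l1_dist V q0 (T p) \<le> l1_dist V q0 (T q0) + l1_dist V (T q0) (T p)"
      unfolding l1_dist_def sum.distrib[symmetric] by (intro sum_mono) auto
    also have "\<dots> \<le> \<rho>"
      using T_q0 contraction[OF q0 p] p(2) by simp
    finally show "T p \<in> extensional V \<and> l1_dist V q0 (T p) \<le> \<rho>"
      by (simp add: T_def newton_step_def)
  qed (blast intro: that)
  have "(\<Sum>c\<in>V. B x c * (G p c - y c)) = 0" if "x \<in> V" for x
    using fun_cong[OF \<open>T p = p\<close>, of x] that by (simp add: T_def newton_step_def)
  then have "G p c = y c" if "c \<in> V" for c
    using matrix_inverse_on_apply[OF matrix_inverse_on_commute[THEN iffD1, OF inv] fin that,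
        of "\<lambda>c. G p c - y c"]
    by simp
  then show ?thesis using in_ball \<open>l1_dist V q0 p \<le> \<rho>\<close> by blast
qed

lemma abs_prod_diff_le:
  fixes x y :: "'a \<Rightarrow> real"
  assumes "finite J" and "\<forall>j\<in>J. \<bar>y j\<bar> \<le> 1 \<and> \<bar>x j - y j\<bar> \<le> \<eta>" and "0 \<le> \<eta>" and "\<eta> \<le> 1"
  shows "\<bar>prod x J - prod y J\<bar> \<le> real (card J) * 2 ^ card J * \<eta>"
  using assms
proof (induction J rule: finite_induct)
  case empty
  then show ?case by simp
next
  case (insert j J)
  let ?m = "card J"
  have IH: "\<bar>prod x J - prod y J\<bar> \<le> real ?m * 2 ^ ?m * \<eta>" using insert by auto
  have yj: "\<bar>y j\<bar> \<le> 1" and xyj: "\<bar>x j - y j\<bar> \<le> \<eta>" using insert.prems by auto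
  then have xj: "\<bar>x j\<bar> \<le> 2" using insert.prems by linarith
  have Py: "\<bar>prod y J\<bar> \<le> 1"
    unfolding abs_prod using insert.prems by (intro prod_le_1) auto
  have "prod x (insert j J) - prod y (insert j J) = x j * (prod x J - prod y J) + (x j - y j) * prod y J"
    using insert.hyps by (simp add: algebra_simps)
  then have "\<bar>prod x (insert j J) - prod y (insert j J)\<bar> \<le>
      \<bar>x j\<bar> * \<bar>prod x J - prod y J\<bar> + \<bar>x j - y j\<bar> * \<bar>prod y J\<bar>"
    by (metis abs_mult abs_triangle_ineq)
  also have "\<dots> \<le> 2 * (real ?m * 2 ^ ?m * \<eta>) + \<eta> * 1"
    by (intro add_mono mult_mono xj IH xyj Py) (auto simp: insert.prems)
  also have "\<dots> \<le> real (Suc ?m) * 2 ^ Suc ?m * \<eta>"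
  proof -
    have "(1::real) \<le> 2 * 2 ^ ?m" using one_le_power[of "2::real" ?m] by linarith
    then have "\<eta> \<le> 2 * 2 ^ ?m * \<eta>"
      using insert.prems(2) mult_right_mono[of 1 "2 * 2 ^ ?m" \<eta>] by simp
    then show ?thesis by (simp add: algebra_simps)
  qed
  finally show ?case using insert.hyps by simp
qed

lemma abs_mult_diff_le: "\<bar>a * x - b * y\<bar> \<le> \<bar>a - b\<bar> * \<bar>x\<bar> + \<bar>b\<bar> * \<bar>x - y\<bar>" for a b x y :: real
proof -
  have "a * x - b * y = (a - b) * x + b * (x - y)" by (simp add: algebra_simps)
  then show ?thesis by (metis abs_mult abs_triangle_ineq)
qed

lemma abs_mult_prod_diff_le:
  fixes x y :: "'a \<Rightarrow> real"
  assumes "finite J" and "card J \<le> m" and xy: "\<forall>j\<in>J. \<bar>y j\<bar> \<le> 1 \<and> \<bar>x j - y j\<bar> \<le> \<eta>"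
    and "0 \<le> \<eta>" and "\<eta> \<le> 1" and ab: "\<bar>a - b\<bar> \<le> \<eta>" and b: "\<bar>b\<bar> \<le> R"
  shows "\<bar>a * prod x J - b * prod y J\<bar> \<le> (1 + m * R) * 2 ^ m * \<eta>"
proof -
  have "\<bar>x j\<bar> \<le> 2" if "j \<in> J" for j
  proof -
    have "\<bar>y j\<bar> \<le> 1" "\<bar>x j - y j\<bar> \<le> \<eta>" using xy that by auto
    then show ?thesis using \<open>\<eta> \<le> 1\<close> by linarith
  qed
  then have X: "\<bar>prod x J\<bar> \<le> 2 ^ m"
    unfolding abs_prod by (intro prod_le_power \<open>card J \<le> m\<close>) auto
  have "\<bar>prod x J - prod y J\<bar> \<le> real (card J) * 2 ^ card J * \<eta>"
    by (rule abs_prod_diff_le) (use assms in auto)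
  also have "\<dots> \<le> m * 2 ^ m * \<eta>"
    using mult_mono[OF of_nat_mono[OF \<open>card J \<le> m\<close>] power_increasing[OF \<open>card J \<le> m\<close>, of "2::real"]]
      \<open>0 \<le> \<eta>\<close>
    by (simp add: mult_right_mono)
  finally have XY: "\<bar>prod x J - prod y J\<bar> \<le> m * 2 ^ m * \<eta>" .
  have "0 \<le> R" using b by linarith
  have "\<bar>a * prod x J - b * prod y J\<bar> \<le> \<bar>a - b\<bar> * \<bar>prod x J\<bar> + \<bar>b\<bar> * \<bar>prod x J - prod y J\<bar>"
    by (rule abs_mult_diff_le)
  also have "\<dots> \<le> \<eta> * 2 ^ m + R * (m * 2 ^ m * \<eta>)"
    using mult_mono[OF ab X \<open>0 \<le> \<eta>\<close> abs_ge_zero] mult_mono[OF b XY \<open>0 \<le> R\<close> abs_ge_zero] by linarith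
  also have "\<dots> = (1 + m * R) * 2 ^ m * \<eta>" by (simp add: algebra_simps)
  finally show ?thesis .
qed

lemma eventually_at_right_0_small:
  fixes K \<kappa> :: real
  assumes "0 < \<kappa>"
  shows "\<forall>\<^sub>F \<eta> in at_right 0. 0 < \<eta> \<and> \<eta> \<le> 1 \<and> K * \<eta> < \<kappa>"
proof -
  have "((\<lambda>\<eta>. K * \<eta>) \<longlongrightarrow> 0) (at_right (0::real))"
    by (auto intro!: tendsto_eq_intros)
  then have "\<forall>\<^sub>F \<eta> in at_right 0. K * \<eta> < \<kappa>"
    using assms by (simp add: order_tendstoD(2))
  moreover have "\<forall>\<^sub>F \<eta> in at_right (0::real). \<eta> \<in> {0<..<1}"
    by (rule eventually_at_right_real) simp
  ultimately show ?thesis by eventually_elim auto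
qed

lemma eventually_at_right_0_witness:
  assumes "\<forall>\<^sub>F \<eta> in at_right (0::real). P \<eta>"
  obtains \<eta> where "0 < \<eta>" and "P \<eta>"
  using eventually_happens'[OF _ eventually_conj[OF eventually_at_right_less assms]] by auto

lemma eventually_at_right_0_below_finite:
  fixes g :: "'a \<Rightarrow> real"
  assumes "finite A" and "\<And>x. x \<in> A \<Longrightarrow> 0 < g x"
  shows "\<forall>\<^sub>F \<eta> in at_right 0. \<forall>x\<in>A. K * \<eta> < g x"
  using assms(1)
proof (rule eventually_ball_finite, intro ballI)
  fix x assume "x \<in> A"
  show "\<forall>\<^sub>F \<eta> in at_right 0. K * \<eta> < g x"
    using eventually_at_right_0_small[OF assms(2)[OF \<open>x \<in> A\<close>], of K] by (rule eventually_mono) simp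
qed

lemma finite_profiles: "finite (profiles n N)"
  unfolding profiles_def by (simp add: finite_PiE)

lemma abs_diff_le_gdist:
  assumes "i < n" and "a \<in> profiles n N"
  shows "\<bar>u i a - v i a\<bar> \<le> gdist n N u v"
proof -
  have "{\<bar>u i a - v i a\<bar> | i a. i < n \<and> a \<in> profiles n N} =
      (\<lambda>(i, a). \<bar>u i a - v i a\<bar>) ` ({..<n} \<times> profiles n N)"
    by auto
  then have "finite {\<bar>u i a - v i a\<bar> | i a. i < n \<and> a \<in> profiles n N}"
    by (simp add: finite_profiles)
  then show ?thesis unfolding gdist_def using assms by (intro Max_ge) auto
qed

lemma (in Metric_space) compactin_uniform_radius:
  assumes "compactin mtopology C" and "\<And>u. u \<in> C \<Longrightarrow> 0 < R u"
  obtains \<delta> where "0 < \<delta>" and "\<And>w. w \<in> C \<Longrightarrow> \<exists>u\<in>C. d u w + \<delta> < R u"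
proof (cases "C = {}")
  case True
  then show ?thesis using that[of 1] by simp
next
  case False
  have "C \<subseteq> M" using compactin_subset_topspace[OF assms(1)] by simp
  have "C \<subseteq> \<Union> ((\<lambda>u. mball u (R u / 2)) ` C)"
  proof
    fix u assume "u \<in> C"
    then have "u \<in> mball u (R u / 2)" using \<open>C \<subseteq> M\<close> assms(2) by auto
    then show "u \<in> \<Union> ((\<lambda>u. mball u (R u / 2)) ` C)" using \<open>u \<in> C\<close> by blast
  qed
  then obtain \<F> where \<F>: "finite \<F>" "\<F> \<subseteq> (\<lambda>u. mball u (R u / 2)) ` C" "C \<subseteq> \<Union> \<F>"
    using assms(1) unfolding compactin_def by (metis (no_types, lifting) imageE openin_mball)
  obtain C' where C': "C' \<subseteq> C" "finite C'" "\<F> = (\<lambda>u. mball u (R u / 2)) ` C'"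
    using finite_subset_image[OF \<F>(1,2)] by blast
  have "C' \<noteq> {}" using False \<F>(3) C'(3) by auto
  define \<delta> where "\<delta> = Min ((\<lambda>u. R u / 2) ` C')"
  show ?thesis
  proof (rule that)
    show "0 < \<delta>" unfolding \<delta>_def using C' \<open>C' \<noteq> {}\<close> assms(2) by (subst Min_gr_iff) auto
    fix w assume "w \<in> C"
    then obtain u where "u \<in> C'" "d u w < R u / 2" using C' \<F>(3) by auto
    moreover have "\<delta> \<le> R u / 2" unfolding \<delta>_def using C' \<open>u \<in> C'\<close> by (intro Min_le) auto
    ultimately show "\<exists>u\<in>C. d u w + \<delta> < R u" using C'(1) by (intro bexI[of _ u]) auto
  qed
qed

locale fixed_profile =
  fixes n :: nat and N :: "nat \<Rightarrow> nat" and \<sigma> :: mixed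
  assumes mixed: "mixed_profile n N \<sigma>"
begin

abbreviation "S \<equiv> support N \<sigma>"
abbreviation "V \<equiv> var_index n N \<sigma>"
abbreviation "a1 \<equiv> ref_action N \<sigma>"
abbreviation "p\<sigma> \<equiv> (\<lambda>(i, k). \<sigma> i k)"
abbreviation "U w i a p \<equiv> util_against n N w \<sigma> i a p"
abbreviation "F w p c \<equiv> char_fun n N w \<sigma> p c"
abbreviation "others i \<equiv> PiE ({..<n} - {i}) S"

lemma support_subset: "S i \<subseteq> {..<N i}"
  by (auto simp: support_def)

lemma finite_support: "finite (S i)"
  using support_subset finite_subset by blast

lemma sigma_nonneg: "i < n \<Longrightarrow> k < N i \<Longrightarrow> 0 \<le> \<sigma> i k"
  using mixed by (auto simp: mixed_profile_def mixed_strategy_def)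

lemma sigma_sum: "i < n \<Longrightarrow> (\<Sum>k<N i. \<sigma> i k) = 1"
  using mixed by (auto simp: mixed_profile_def mixed_strategy_def)

lemma sigma_le_1: "i < n \<Longrightarrow> k < N i \<Longrightarrow> \<sigma> i k \<le> 1"
  using sigma_sum[of i] sigma_nonneg member_le_sum[of k "{..<N i}" "\<sigma> i"] by simp

lemma sigma_zero_off_support: "i < n \<Longrightarrow> k < N i \<Longrightarrow> k \<notin> S i \<Longrightarrow> \<sigma> i k = 0"
  using sigma_nonneg[of i k] by (auto simp: support_def)

lemma sigma_sum_support: "i < n \<Longrightarrow> (\<Sum>k\<in>S i. \<sigma> i k) = 1"
  using support_subset sigma_zero_off_support sigma_sum[of i]
  by (simp add: sum.mono_neutral_left[of "{..<N i}" "S i"])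

lemma ref_action_in_support: "i < n \<Longrightarrow> a1 i \<in> S i"
  unfolding ref_action_def using sigma_sum_support[of i] finite_support
  by (intro Min_in) auto

lemma var_index_iff: "(i, k) \<in> V \<longleftrightarrow> i < n \<and> k \<in> S i"
  by (simp add: var_index_def)

lemma finite_var_index: "finite V"
proof -
  have "V = Sigma {..<n} S" by (auto simp: var_index_def)
  then show ?thesis using finite_support by simp
qed

lemma p\<sigma>_pos: "x \<in> V \<Longrightarrow> 0 < p\<sigma> x"
  by (auto simp: var_index_def support_def)

lemma p\<sigma>_abs_le_1: "x \<in> V \<Longrightarrow> \<bar>p\<sigma> x\<bar> \<le> 1"
  using sigma_le_1 p\<sigma>_pos by (auto simp: var_index_def support_def)

lemma others_var_index: "b \<in> others i \<Longrightarrow> j \<in> {..<n} - {i} \<Longrightarrow> (j, b j) \<in> V"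
  by (auto simp: var_index_def PiE_iff)

lemma others_update_profiles:
  assumes "i < n" and "a < N i" and "b \<in> others i"
  shows "b(i := a) \<in> profiles n N"
  unfolding profiles_def
proof (rule PiE_I)
  fix j assume "j \<in> {..<n}"
  then show "(b(i := a)) j \<in> {..<N j}"
    using assms support_subset[of j] by (cases "j = i") (auto simp: PiE_iff)
next
  fix j assume "j \<notin> {..<n}"
  then show "(b(i := a)) j = undefined"
    using assms by (auto simp: PiE_iff extensional_def)
qed

lemma util_against_cong: "i < n \<Longrightarrow> \<forall>x\<in>V. p x = q x \<Longrightarrow> U w i a p = U w i a q"
  unfolding util_against_def
  by (intro sum.cong refl arg_cong2[where f = "(*)"] prod.cong) (auto dest: others_var_index)

lemma char_fun_cong:
  assumes "c \<in> V" and "\<forall>x\<in>V. p x = q x"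
  shows "F w p c = F w q c"
proof -
  obtain i k where c: "c = (i, k)" "i < n" using assms(1) by (cases c) (auto simp: var_index_iff)
  have "(\<Sum>l\<in>S i. p (i, l)) = (\<Sum>l\<in>S i. q (i, l))"
    using assms(2) c by (intro sum.cong) (auto simp: var_index_iff)
  then show ?thesis
    using util_against_cong[OF c(2) assms(2)] c by (simp add: char_fun_def)
qed

lemma multiaffine_util_against: "multiaffine (U w i a)"
  unfolding util_against_def by (intro multiaffine_sum multiaffine_prod) (auto intro: inj_onI)

lemma multiaffine_char_fun: "multiaffine (\<lambda>p. F w p c)"
proof -
  obtain i k where c: "c = (i, k)" by (cases c)
  show ?thesis
  proof (cases "k = a1 i")
    case True
    have "multiaffine (\<lambda>p. \<Sum>l\<in>S i. 1 * p (i, l))"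
      by (intro multiaffine_sum multiaffine_coordinate)
    then show ?thesis using True by (simp add: c char_fun_def)
  next
    case False
    then show ?thesis
      using multiaffine_diff[OF multiaffine_util_against multiaffine_util_against]
      by (simp add: c char_fun_def)
  qed
qed

lemma jacobian_char_fun:
  "jacobian (char_fun n N w \<sigma>) p c v = F w (p(v := 1)) c - F w (p(v := 0)) c"
  unfolding jacobian_def by (rule multiaffine_deriv[OF multiaffine_char_fun])

definition near :: "game \<Rightarrow> real \<Rightarrow> game \<Rightarrow> (nat \<times> nat \<Rightarrow> real) \<Rightarrow> (nat \<times> nat \<Rightarrow> real) \<Rightarrow> bool" where
  "near u \<eta> w p q \<longleftrightarrow> gdist n N u w \<le> \<eta> \<and> (\<forall>x\<in>V. \<bar>q x\<bar> \<le> 1 \<and> \<bar>p x - q x\<bar> \<le> \<eta>)"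

lemma util_against_diff_le:
  fixes \<eta> :: real and u w :: game
  assumes i: "i < n" and a: "a < N i" and "0 \<le> \<eta>" "\<eta> \<le> 1" and near: "near u \<eta> w p q"
  shows "\<bar>U w i a p - U u i a q\<bar> \<le>
    real (card (others i)) * ((1 + n * (\<Sum>b\<in>profiles n N. \<bar>u i b\<bar>)) * 2 ^ n) * \<eta>"
proof -
  let ?J = "{..<n} - {i}"
  define R where "R = (\<Sum>b\<in>profiles n N. \<bar>u i b\<bar>)"
  have "card ?J \<le> n" using card_mono[of "{..<n}" ?J] by auto
  have term_le: "\<bar>w i (b(i := a)) * (\<Prod>j\<in>?J. p (j, b j)) - u i (b(i := a)) * (\<Prod>j\<in>?J. q (j, b j))\<bar>
      \<le> (1 + n * R) * 2 ^ n * \<eta>" if b: "b \<in> others i" for b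
  proof (rule abs_mult_prod_diff_le[OF _ \<open>card ?J \<le> n\<close> _ assms(3,4)])
    have b': "b(i := a) \<in> profiles n N" by (rule others_update_profiles[OF i a b])
    show "\<bar>w i (b(i := a)) - u i (b(i := a))\<bar> \<le> \<eta>"
      using near abs_diff_le_gdist[OF i b', of u w] unfolding near_def by (simp add: abs_minus_commute)
    show "\<bar>u i (b(i := a))\<bar> \<le> R"
      unfolding R_def by (rule member_le_sum[OF b' _ finite_profiles]) simp
    show "\<forall>j\<in>?J. \<bar>q (j, b j)\<bar> \<le> 1 \<and> \<bar>p (j, b j) - q (j, b j)\<bar> \<le> \<eta>"
      using near others_var_index[OF b] unfolding near_def by blast
  qed simp
  have "\<bar>U w i a p - U u i a q\<bar> \<le> (\<Sum>b\<in>others i.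
      \<bar>w i (b(i := a)) * (\<Prod>j\<in>?J. p (j, b j)) - u i (b(i := a)) * (\<Prod>j\<in>?J. q (j, b j))\<bar>)"
    unfolding util_against_def sum_subtractf[symmetric] by (rule sum_abs)
  also have "\<dots> \<le> real (card (others i)) * ((1 + n * R) * 2 ^ n * \<eta>)"
    using term_le by (intro sum_bounded_above) auto
  finally show ?thesis by (simp add: R_def mult.assoc)
qed

lemma eventually_util_against_close:
  assumes "i < n" and "a < N i" and "0 < \<kappa>"
  shows "\<forall>\<^sub>F \<eta> in at_right 0. \<forall>w p q. near u \<eta> w p q \<longrightarrow> \<bar>U w i a p - U u i a q\<bar> < \<kappa>"
  using eventually_at_right_0_small[OF assms(3),
      of "real (card (others i)) * ((1 + n * (\<Sum>b\<in>profiles n N. \<bar>u i b\<bar>)) * 2 ^ n)"]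
proof eventually_elim
  case (elim \<eta>)
  show ?case
  proof (intro allI impI)
    fix w p q assume "near u \<eta> w p q"
    with elim show "\<bar>U w i a p - U u i a q\<bar> < \<kappa>"
      using util_against_diff_le[OF assms(1,2), of \<eta> u w p q] by linarith
  qed
qed

lemma eventually_char_fun_close:
  assumes "c \<in> V" and "0 < \<kappa>"
  shows "\<forall>\<^sub>F \<eta> in at_right 0. \<forall>w p q. near u \<eta> w p q \<longrightarrow> \<bar>F w p c - F u q c\<bar> < \<kappa>"
proof -
  obtain i k where c: "c = (i, k)" "i < n" "k \<in> S i" using assms(1) by (cases c) (auto simp: var_index_iff)
  show ?thesis
  proof (cases "k = a1 i")
    case True
    show ?thesis using eventually_at_right_0_small[OF assms(2), of "card (S i)"]
    proof eventually_elim
      case (elim \<eta>)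
      show ?case
      proof (intro allI impI)
        fix w p q assume "near u \<eta> w p q"
        then have "\<forall>l\<in>S i. \<bar>p (i, l) - q (i, l)\<bar> \<le> \<eta>"
          using c unfolding near_def by (auto simp: var_index_iff)
        then have "\<bar>\<Sum>l\<in>S i. p (i, l) - q (i, l)\<bar> \<le> card (S i) * \<eta>"
          by (intro sum_abs[THEN order_trans] sum_bounded_above) auto
        then show "\<bar>F w p c - F u q c\<bar> < \<kappa>"
          using True c elim by (simp add: char_fun_def sum_subtractf)
      qed
    qed
  next
    case False
    have k: "k < N i" and a1: "a1 i < N i"
      using c ref_action_in_support support_subset by auto
    show ?thesis
      using eventually_util_against_close[OF c(2) a1 half_gt_zero[OF assms(2)], of u]
        eventually_util_against_close[OF c(2) k half_gt_zero[OF assms(2)], of u]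
    proof eventually_elim
      case (elim \<eta>)
      show ?case
      proof (intro allI impI)
        fix w p q assume "near u \<eta> w p q"
        then have "\<bar>U w i (a1 i) p - U u i (a1 i) q\<bar> < \<kappa>/2" "\<bar>U w i k p - U u i k q\<bar> < \<kappa>/2"
          using elim by blast+
        moreover have "F w p c - F u q c = (U w i (a1 i) p - U u i (a1 i) q) - (U w i k p - U u i k q)"
          using False c by (simp add: char_fun_def)
        ultimately show "\<bar>F w p c - F u q c\<bar> < \<kappa>" by linarith
      qed
    qed
  qed
qed

lemma eu_update_eq_sum_util_against:
  assumes i: "i < n" and \<tau>: "\<forall>j<n. \<forall>l<N j. l \<notin> S j \<longrightarrow> \<tau> j l = 0"
  shows "eu n N w (\<tau>(i := s)) i = (\<Sum>k<N i. s k * U w i k (\<lambda>(j, l). \<tau> j l))"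
proof -
  let ?J = "{..<n} - {i}" and ?B = "\<lambda>j. {..<N j}"
  have iJ: "insert i ?J = {..<n}" using i by auto
  have "profiles n N = PiE (insert i ?J) ?B" by (simp only: profiles_def iJ)
  also have "\<dots> = (\<lambda>(y, g). g(i := y)) ` (?B i \<times> PiE ?J ?B)" by (rule PiE_insert_eq)
  finally have prof: "profiles n N = (\<lambda>(y, g). g(i := y)) ` (?B i \<times> PiE ?J ?B)" .
  have prod_eq: "(\<Prod>j<n. (\<tau>(i := s)) j ((g(i := y)) j)) = s y * (\<Prod>j\<in>?J. \<tau> j (g j))" for g y
  proof -
    have "(\<Prod>j<n. (\<tau>(i := s)) j ((g(i := y)) j)) = s y * (\<Prod>j\<in>?J. (\<tau>(i := s)) j ((g(i := y)) j))"
      by (subst iJ[symmetric], subst prod.insert) auto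
    also have "(\<Prod>j\<in>?J. (\<tau>(i := s)) j ((g(i := y)) j)) = (\<Prod>j\<in>?J. \<tau> j (g j))"
      by (intro prod.cong) auto
    finally show ?thesis .
  qed
  have restrict_support: "(\<Sum>g\<in>PiE ?J ?B. w i (g(i := y)) * (\<Prod>j\<in>?J. \<tau> j (g j))) =
      (\<Sum>g\<in>others i. w i (g(i := y)) * (\<Prod>j\<in>?J. \<tau> j (g j)))" for y
  proof (rule sum.mono_neutral_right)
    show "finite (PiE ?J ?B)" by (simp add: finite_PiE)
    show "others i \<subseteq> PiE ?J ?B" using support_subset by (intro PiE_mono) auto
    show "\<forall>g\<in>PiE ?J ?B - others i. w i (g(i := y)) * (\<Prod>j\<in>?J. \<tau> j (g j)) = 0"
    proof
      fix g assume g: "g \<in> PiE ?J ?B - others i"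
      then obtain j where j: "j \<in> ?J" "g j \<notin> S j" "g j < N j" by (auto simp: PiE_iff)
      then have "\<tau> j (g j) = 0" using \<tau> by auto
      then have "(\<Prod>j\<in>?J. \<tau> j (g j)) = 0"
        using j(1) by (metis finite_Diff finite_lessThan prod_zero)
      then show "w i (g(i := y)) * (\<Prod>j\<in>?J. \<tau> j (g j)) = 0" by simp
    qed
  qed
  have "eu n N w (\<tau>(i := s)) i =
      (\<Sum>(y, g)\<in>?B i \<times> PiE ?J ?B. w i (g(i := y)) * (\<Prod>j<n. (\<tau>(i := s)) j ((g(i := y)) j)))"
    unfolding eu_def prof
    by (subst sum.reindex[OF inj_combinator]) (simp_all add: case_prod_unfold)
  also have "\<dots> = (\<Sum>y\<in>?B i. \<Sum>g\<in>PiE ?J ?B. s y * (w i (g(i := y)) * (\<Prod>j\<in>?J. \<tau> j (g j))))"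
    unfolding prod_eq by (subst sum.cartesian_product) (simp add: mult.left_commute)
  also have "\<dots> = (\<Sum>y\<in>?B i. s y * (\<Sum>g\<in>PiE ?J ?B. w i (g(i := y)) * (\<Prod>j\<in>?J. \<tau> j (g j))))"
    by (simp add: sum_distrib_left)
  finally show ?thesis
    unfolding restrict_support by (simp add: util_against_def)
qed

lemma nash_util_against_le:
  assumes "nash n N u \<sigma>" and "i < n" and "k < N i"
  shows "U u i k p\<sigma> \<le> eu n N u \<sigma> i"
proof -
  define s where "s = (\<lambda>j. if j = k then 1 else (0::real))"
  have "mixed_strategy N i s" unfolding mixed_strategy_def s_def using assms(3) by auto
  then have "eu n N u (\<sigma>(i := s)) i \<le> eu n N u \<sigma> i"
    using assms(1,2) unfolding nash_def by blast
  moreover have "eu n N u (\<sigma>(i := s)) i = U u i k p\<sigma>"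
    using eu_update_eq_sum_util_against[OF assms(2)] sigma_zero_off_support assms(3)
    by (simp add: s_def if_distrib[of "\<lambda>x. x * _"] cong: if_cong)
  ultimately show ?thesis by simp
qed

lemma nash_util_against_eq:
  assumes "nash n N u \<sigma>" and "i < n" and "k \<in> S i"
  shows "U u i k p\<sigma> = eu n N u \<sigma> i"
proof -
  let ?m = "eu n N u \<sigma> i"
  have "?m = (\<Sum>k'<N i. \<sigma> i k' * U u i k' p\<sigma>)"
    using eu_update_eq_sum_util_against[OF assms(2), of \<sigma> w "\<sigma> i" for w] sigma_zero_off_support by simp
  then have "(\<Sum>k'<N i. \<sigma> i k' * (?m - U u i k' p\<sigma>)) = 0"
    using sigma_sum[OF assms(2)] by (simp add: right_diff_distrib sum_subtractf flip: sum_distrib_right)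
  moreover have "\<forall>k'\<in>{..<N i}. 0 \<le> \<sigma> i k' * (?m - U u i k' p\<sigma>)"
    using sigma_nonneg[OF assms(2)] nash_util_against_le[OF assms(1,2)] by auto
  ultimately have "\<forall>k'\<in>{..<N i}. \<sigma> i k' * (?m - U u i k' p\<sigma>) = 0"
    using sum_nonneg_eq_0_iff[of "{..<N i}" "\<lambda>k'. \<sigma> i k' * (?m - U u i k' p\<sigma>)"] by blast
  moreover have "k \<in> {..<N i}" "0 < \<sigma> i k" using assms(3) by (auto simp: support_def)
  ultimately show ?thesis by force
qed

lemma nash_if_indifferent:
  assumes mixed_\<tau>: "mixed_profile n N \<tau>" and off: "\<forall>j<n. \<forall>l<N j. l \<notin> S j \<longrightarrow> \<tau> j l = 0"
    and indiff: "\<And>i k. i < n \<Longrightarrow> k \<in> S i \<Longrightarrow>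
      U w i k (\<lambda>(j, l). \<tau> j l) = U w i (a1 i) (\<lambda>(j, l). \<tau> j l)"
    and best: "\<And>i k. i < n \<Longrightarrow> k < N i \<Longrightarrow>
      U w i k (\<lambda>(j, l). \<tau> j l) \<le> U w i (a1 i) (\<lambda>(j, l). \<tau> j l)"
  shows "nash n N w \<tau>" and "\<And>i. i < n \<Longrightarrow> eu n N w \<tau> i = U w i (a1 i) (\<lambda>(j, l). \<tau> j l)"
proof -
  let ?p = "\<lambda>(j, l). \<tau> j l"
  have strategy: "mixed_strategy N i (\<tau> i)" if "i < n" for i
    using mixed_\<tau> that by (simp add: mixed_profile_def)
  show payoff: "eu n N w \<tau> i = U w i (a1 i) ?p" if i: "i < n" for i
  proof -
    have "eu n N w \<tau> i = (\<Sum>k<N i. \<tau> i k * U w i k ?p)"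
      using eu_update_eq_sum_util_against[OF i off, of w "\<tau> i"] by simp
    also have "\<dots> = (\<Sum>k<N i. \<tau> i k * U w i (a1 i) ?p)"
    proof (intro sum.cong refl)
      fix k assume "k \<in> {..<N i}"
      then show "\<tau> i k * U w i k ?p = \<tau> i k * U w i (a1 i) ?p"
        using off indiff[OF i, of k] i by (cases "k \<in> S i") auto
    qed
    also have "\<dots> = U w i (a1 i) ?p"
      using strategy[OF i] by (simp add: mixed_strategy_def flip: sum_distrib_right)
    finally show ?thesis .
  qed
  show "nash n N w \<tau>"
    unfolding nash_def
  proof (intro conjI mixed_\<tau> allI impI)
    fix i s assume i: "i < n" and s: "mixed_strategy N i s"
    have "eu n N w (\<tau>(i := s)) i = (\<Sum>k<N i. s k * U w i k ?p)"
      by (rule eu_update_eq_sum_util_against[OF i off])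
    also have "\<dots> \<le> (\<Sum>k<N i. s k * U w i (a1 i) ?p)"
      using s best[OF i] by (intro sum_mono mult_left_mono) (auto simp: mixed_strategy_def)
    also have "\<dots> = eu n N w \<tau> i"
      using s payoff[OF i] by (simp add: mixed_strategy_def flip: sum_distrib_right)
    finally show "eu n N w (\<tau>(i := s)) i \<le> eu n N w \<tau> i" .
  qed
qed

lemma nash_of_char_fun_solution:
  assumes nash: "nash n N u \<sigma>"
    and pos: "\<forall>x\<in>V. 0 < p x"
    and solves: "\<forall>c\<in>V. F w p c = F u p\<sigma> c"
    and strict: "\<And>i k. i < n \<Longrightarrow> k < N i \<Longrightarrow> k \<notin> S i \<Longrightarrow> U w i k p < U w i (a1 i) p"
  defines "\<tau> \<equiv> \<lambda>i k. if k \<in> S i then p (i, k) else 0"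
  shows "nash n N w \<tau>" and "\<And>i. i < n \<Longrightarrow> support N \<tau> i = S i"
    and "\<And>i. i < n \<Longrightarrow> eu n N w \<tau> i = U w i (a1 i) p"
proof -
  have off: "\<forall>j<n. \<forall>l<N j. l \<notin> S j \<longrightarrow> \<tau> j l = 0" by (simp add: \<tau>_def)
  have U_\<tau>: "U w i a (\<lambda>(j, l). \<tau> j l) = U w i a p" if "i < n" for i a
    using that by (intro util_against_cong) (auto simp: \<tau>_def var_index_iff)
  have sum: "(\<Sum>k<N i. \<tau> i k) = 1" if i: "i < n" for i
  proof -
    have "(\<Sum>k<N i. \<tau> i k) = (\<Sum>k\<in>S i. p (i, k))"
      by (simp add: \<tau>_def sum.If_cases Int_absorb1[OF support_subset])
    also have "\<dots> = F u p\<sigma> (i, a1 i)"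
      using solves[rule_format, of "(i, a1 i)"] ref_action_in_support[OF i] i
      by (simp add: var_index_iff char_fun_def)
    also have "\<dots> = 1" using sigma_sum_support[OF i] by (simp add: char_fun_def)
    finally show ?thesis .
  qed
  have mixed_\<tau>: "mixed_profile n N \<tau>"
    using pos sum by (auto simp: mixed_profile_def mixed_strategy_def \<tau>_def var_index_iff less_imp_le)
  have indiff: "U w i k p = U w i (a1 i) p" if i: "i < n" and k: "k \<in> S i" for i k
  proof (cases "k = a1 i")
    case False
    have "U w i (a1 i) p - U w i k p = U u i (a1 i) p\<sigma> - U u i k p\<sigma>"
      using solves[rule_format, of "(i, k)"] i k False by (simp add: var_index_iff char_fun_def)
    also have "\<dots> = 0"
      using nash_util_against_eq[OF nash i k] nash_util_against_eq[OF nash i ref_action_in_support[OF i]]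
      by simp
    finally show ?thesis by simp
  qed simp
  have best: "U w i k p \<le> U w i (a1 i) p" if "i < n" "k < N i" for i k
    using indiff strict that by (cases "k \<in> S i") (auto intro: less_imp_le)
  show "nash n N w \<tau>"
    using nash_if_indifferent(1)[OF mixed_\<tau> off] indiff best by (simp add: U_\<tau>)
  show "eu n N w \<tau> i = U w i (a1 i) p" if "i < n" for i
    using nash_if_indifferent(2)[OF mixed_\<tau> off _ _ that] indiff best that by (simp add: U_\<tau>)
  show "support N \<tau> i = S i" if "i < n" for i
    using pos that support_subset by (auto simp: support_def \<tau>_def var_index_iff)
qed

lemma eu_diff_le_gdist:
  assumes "i < n"
  shows "\<bar>eu n N w \<sigma> i - eu n N u \<sigma> i\<bar> \<le> card (profiles n N) * gdist n N u w"
proof -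
  have term_le: "\<bar>(w i a - u i a) * (\<Prod>j<n. \<sigma> j (a j))\<bar> \<le> gdist n N u w" if a: "a \<in> profiles n N" for a
  proof -
    have "\<And>j. j < n \<Longrightarrow> a j < N j" using a unfolding profiles_def by (auto simp: PiE_iff)
    then have "\<bar>\<Prod>j<n. \<sigma> j (a j)\<bar> \<le> 1"
      unfolding abs_prod using sigma_nonneg sigma_le_1 by (intro prod_le_1) auto
    moreover have "\<bar>w i a - u i a\<bar> \<le> gdist n N u w"
      using abs_diff_le_gdist[OF assms a, of u w] by (simp add: abs_minus_commute)
    ultimately show ?thesis
      unfolding abs_mult using mult_mono[of "\<bar>w i a - u i a\<bar>" "gdist n N u w" _ 1] by simp
  qed
  have "eu n N w \<sigma> i - eu n N u \<sigma> i = (\<Sum>a\<in>profiles n N. (w i a - u i a) * (\<Prod>j<n. \<sigma> j (a j)))"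
    unfolding eu_def by (simp add: sum_subtractf left_diff_distrib)
  also have "\<bar>\<dots>\<bar> \<le> (\<Sum>a\<in>profiles n N. \<bar>(w i a - u i a) * (\<Prod>j<n. \<sigma> j (a j))\<bar>)"
    by (rule sum_abs)
  also have "\<dots> \<le> card (profiles n N) * gdist n N u w"
    using term_le by (rule sum_bounded_above)
  finally show ?thesis .
qed

lemma char_fun_increment_close:
  assumes close: "\<forall>c\<in>V. \<forall>w p q. near u \<rho> w p q \<longrightarrow> \<bar>F w p c - F u q c\<bar> < \<kappa> / 2"
    and "gdist n N u w \<le> \<rho>" and z: "\<forall>x\<in>V. \<bar>z x - p\<sigma> x\<bar> \<le> \<rho>" and "c \<in> V" and "0 \<le> \<rho>"
  shows "\<bar>F w (z(v := 1)) c - F w (z(v := 0)) c - jacobian (char_fun n N u \<sigma>) p\<sigma> c v\<bar> \<le> \<kappa>"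
proof -
  have "near u \<rho> w (z(v := t)) (p\<sigma>(v := t))" if "t = 0 \<or> t = 1" for t
    unfolding near_def
  proof (intro conjI ballI)
    fix x assume "x \<in> V"
    show "\<bar>(p\<sigma>(v := t)) x\<bar> \<le> 1" using that p\<sigma>_abs_le_1[OF \<open>x \<in> V\<close>] by (cases "x = v") auto
    show "\<bar>(z(v := t)) x - (p\<sigma>(v := t)) x\<bar> \<le> \<rho>" using z \<open>x \<in> V\<close> assms(5) by (cases "x = v") auto
  qed (rule assms(2))
  then have "\<bar>F w (z(v := t)) c - F u (p\<sigma>(v := t)) c\<bar> < \<kappa> / 2" if "t = 0 \<or> t = 1" for t
    using close \<open>c \<in> V\<close> that by blast
  from this[of 0] this[of 1] show ?thesis
    unfolding jacobian_char_fun by linarith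
qed

lemma char_fun_solvable_radius:
  assumes inv: "matrix_inverse_on V (jacobian (char_fun n N u \<sigma>) p\<sigma>) B"
    and small: "(\<Sum>x\<in>V. \<Sum>c\<in>V. \<bar>B x c\<bar>) * card V * \<kappa> \<le> 1/2"
    and close: "\<forall>c\<in>V. \<forall>w p q. near u \<rho> w p q \<longrightarrow> \<bar>F w p c - F u q c\<bar> < \<kappa> / 2"
    and "0 < \<rho>"
  shows "\<exists>r>0. \<forall>w. gdist n N u w \<le> r \<longrightarrow>
           (\<exists>p. (\<forall>x\<in>V. \<bar>p x - p\<sigma> x\<bar> \<le> \<rho>) \<and> (\<forall>c\<in>V. F w p c = F u p\<sigma> c))"
proof -
  define \<beta> where "\<beta> = (\<Sum>x\<in>V. \<Sum>c\<in>V. \<bar>B x c\<bar>)"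
  have "0 \<le> \<beta>" unfolding \<beta>_def by (intro sum_nonneg) auto
  then have "0 \<le> \<beta> * card V" by simp
  define \<theta> where "\<theta> = \<rho> / (2 * (\<beta> * card V + 1))"
  have "0 < \<theta>" unfolding \<theta>_def using \<open>0 \<le> \<beta> * card V\<close> \<open>0 < \<rho>\<close> by simp
  have "\<forall>\<^sub>F r in at_right 0. \<forall>c\<in>V. \<forall>w p q. near u r w p q \<longrightarrow> \<bar>F w p c - F u q c\<bar> < \<theta>"
    by (intro eventually_ball_finite[OF finite_var_index] ballI eventually_char_fun_close[OF _ \<open>0 < \<theta>\<close>])
  then obtain r where "0 < r" and r: "\<forall>c\<in>V. \<forall>w p q. near u r w p q \<longrightarrow> \<bar>F w p c - F u q c\<bar> < \<theta>"
    by (rule eventually_at_right_0_witness)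
  show ?thesis
  proof (intro exI[of _ "min r \<rho>"] conjI allI impI)
    show "0 < min r \<rho>" using \<open>0 < r\<close> \<open>0 < \<rho>\<close> by simp
    fix w assume w: "gdist n N u w \<le> min r \<rho>"
    have "near u r w p\<sigma> p\<sigma>" unfolding near_def using w p\<sigma>_abs_le_1 \<open>0 < r\<close> by auto
    then have "\<bar>F w p\<sigma> c - F u p\<sigma> c\<bar> \<le> \<theta>" if "c \<in> V" for c
      using r that by (blast intro: less_imp_le)
    then have "(\<Sum>c\<in>V. \<bar>F w p\<sigma> c - F u p\<sigma> c\<bar>) \<le> card V * \<theta>"
      by (rule sum_bounded_above)
    then have "\<beta> * (\<Sum>c\<in>V. \<bar>F w p\<sigma> c - F u p\<sigma> c\<bar>) \<le> \<beta> * (card V * \<theta>)"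
      using \<open>0 \<le> \<beta>\<close> by (rule mult_left_mono)
    also have "\<dots> \<le> \<rho> / 2"
      unfolding \<theta>_def using \<open>0 \<le> \<beta> * card V\<close> \<open>0 < \<rho>\<close> by (simp add: field_simps)
    finally have start: "\<beta> * (\<Sum>c\<in>V. \<bar>F w p\<sigma> c - F u p\<sigma> c\<bar>) \<le> \<rho> / 2" .
    show "\<exists>p. (\<forall>x\<in>V. \<bar>p x - p\<sigma> x\<bar> \<le> \<rho>) \<and> (\<forall>c\<in>V. F w p c = F u p\<sigma> c)"
    proof (rule multiaffine_newton[where G = "\<lambda>p c. F w p c",
          OF finite_var_index char_fun_cong multiaffine_char_fun inv \<open>0 < \<rho>\<close> _ small])
      show "\<bar>F w (z(v := 1)) c - F w (z(v := 0)) c - jacobian (char_fun n N u \<sigma>) p\<sigma> c v\<bar> \<le> \<kappa>"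
        if "\<forall>x\<in>V. \<bar>z x - p\<sigma> x\<bar> \<le> \<rho>" "c \<in> V" for z c v
        using close w that \<open>0 < \<rho>\<close> by (intro char_fun_increment_close) auto
      show "(\<Sum>x\<in>V. \<Sum>c\<in>V. \<bar>B x c\<bar>) * (\<Sum>c\<in>V. \<bar>F w p\<sigma> c - F u p\<sigma> c\<bar>) \<le> \<rho> / 2"
        using start unfolding \<beta>_def .
    qed
  qed
qed

lemma eventually_char_fun_solvable:
  assumes "non_degenerate n N u \<sigma>"
  shows "\<forall>\<^sub>F \<rho> in at_right 0. \<exists>r>0. \<forall>w. gdist n N u w \<le> r \<longrightarrow>
           (\<exists>p. (\<forall>x\<in>V. \<bar>p x - p\<sigma> x\<bar> \<le> \<rho>) \<and> (\<forall>c\<in>V. F w p c = F u p\<sigma> c))"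
proof -
  obtain B where inv: "matrix_inverse_on V (jacobian (char_fun n N u \<sigma>) p\<sigma>) B"
    using det_on_nonzero_imp_inverse[OF finite_var_index] assms unfolding non_degenerate_def by blast
  define \<beta> where "\<beta> = (\<Sum>x\<in>V. \<Sum>c\<in>V. \<bar>B x c\<bar>)"
  have "0 \<le> \<beta> * card V" unfolding \<beta>_def by (intro mult_nonneg_nonneg sum_nonneg) auto
  define \<kappa> where "\<kappa> = 1 / (2 * (\<beta> * card V + 1))"
  have "0 < \<kappa>" unfolding \<kappa>_def using \<open>0 \<le> \<beta> * card V\<close> by simp
  have small: "\<beta> * card V * \<kappa> \<le> 1/2"
    unfolding \<kappa>_def using \<open>0 \<le> \<beta> * card V\<close> by (simp add: field_simps)
  have "\<forall>\<^sub>F \<rho> in at_right 0. \<forall>c\<in>V. \<forall>w p q. near u \<rho> w p q \<longrightarrow> \<bar>F w p c - F u q c\<bar> < \<kappa> / 2"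
    by (intro eventually_ball_finite[OF finite_var_index] ballI
        eventually_char_fun_close[OF _ half_gt_zero[OF \<open>0 < \<kappa>\<close>]])
  then show ?thesis
    using eventually_at_right_less[of "0::real"]
    by eventually_elim (rule char_fun_solvable_radius[OF inv small[unfolded \<beta>_def]])
qed

lemma nash_near_of_char_fun_solution:
  assumes nash: "nash n N u \<sigma>"
    and gap: "\<And>i k. i < n \<Longrightarrow> k < N i \<Longrightarrow> k \<notin> S i \<Longrightarrow> 2 * \<gamma> < U u i (a1 i) p\<sigma> - U u i k p\<sigma>"
    and close: "\<And>i a. i < n \<Longrightarrow> a < N i \<Longrightarrow> \<bar>U w i a p - U u i a p\<sigma>\<bar> < \<gamma>"
    and pos: "\<forall>x\<in>V. 0 < p x" and solves: "\<forall>c\<in>V. F w p c = F u p\<sigma> c"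
  shows "\<exists>\<tau>. nash n N w \<tau> \<and> (\<forall>i<n. support N \<tau> i = S i) \<and>
    (\<forall>i<n. \<bar>eu n N w \<tau> i - eu n N u \<sigma> i\<bar> < \<gamma>)"
proof -
  have a1: "a1 i < N i" if "i < n" for i
    using ref_action_in_support[OF that] support_subset by blast
  have "U w i k p < U w i (a1 i) p" if "i < n" "k < N i" "k \<notin> S i" for i k
    using close[OF that(1,2)] close[OF that(1) a1[OF that(1)]] gap[OF that] by simp
  then obtain \<tau> where "nash n N w \<tau>" "\<forall>i<n. support N \<tau> i = S i"
    and "\<forall>i<n. eu n N w \<tau> i = U w i (a1 i) p"
    using nash_of_char_fun_solution[OF nash pos solves] by blast
  moreover have "\<bar>U w i (a1 i) p - eu n N u \<sigma> i\<bar> < \<gamma>" if "i < n" for i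
    using close[OF that a1[OF that]] nash_util_against_eq[OF nash that ref_action_in_support[OF that]]
    by simp
  ultimately show ?thesis by auto
qed

lemma non_degenerate_margin:
  assumes "non_degenerate n N u \<sigma>" and "0 < \<epsilon>"
  obtains \<gamma> where "0 < \<gamma>" and "\<gamma> < \<epsilon>"
    and "\<And>i k. i < n \<Longrightarrow> k < N i \<Longrightarrow> k \<notin> S i \<Longrightarrow> 2 * \<gamma> < U u i (a1 i) p\<sigma> - U u i k p\<sigma>"
proof -
  define off where "off = Sigma {..<n} (\<lambda>i. {..<N i} - S i)"
  define gap where "gap x = U u (fst x) (a1 (fst x)) p\<sigma> - U u (fst x) (snd x) p\<sigma>" for x
  have "0 < gap x" if "x \<in> off" for x
    using assms(1) that unfolding non_degenerate_def gap_def off_def by (cases x) auto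
  then have "\<forall>\<^sub>F \<gamma> in at_right 0. (0 < \<gamma> \<and> \<gamma> \<le> 1 \<and> 1 * \<gamma> < \<epsilon>) \<and> (\<forall>x\<in>off. 2 * \<gamma> < gap x)"
    unfolding off_def
    by (intro eventually_conj eventually_at_right_0_small[OF assms(2)] eventually_at_right_0_below_finite) auto
  then obtain \<gamma> where "0 < \<gamma>" "\<gamma> < \<epsilon>" and "\<forall>x\<in>off. 2 * \<gamma> < gap x"
    by (rule eventually_at_right_0_witness) auto
  then show thesis
    by (intro that[of \<gamma>]) (auto simp: off_def gap_def)
qed

lemma local_punishment:
  assumes nash: "nash n N u \<sigma>" and nondeg: "non_degenerate n N u \<sigma>" and "0 < \<epsilon>"
  shows "\<exists>r>0. \<forall>w. gdist n N u w < r \<longrightarrow> (\<exists>\<tau>. nash n N w \<tau> \<and> (\<forall>i<n. support N \<tau> i = S i) \<and>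
           (\<forall>i<n. \<bar>eu n N w \<tau> i - eu n N u \<sigma> i\<bar> < \<epsilon>))"
proof -
  define actions where "actions = Sigma {..<n} (\<lambda>i. {..<N i})"
  obtain \<gamma> where "0 < \<gamma>" "\<gamma> < \<epsilon>"
    and gap: "\<And>i k. i < n \<Longrightarrow> k < N i \<Longrightarrow> k \<notin> S i \<Longrightarrow> 2 * \<gamma> < U u i (a1 i) p\<sigma> - U u i k p\<sigma>"
    using non_degenerate_margin[OF nondeg \<open>0 < \<epsilon>\<close>] by blast
  have "\<forall>\<^sub>F \<rho> in at_right 0.
      (\<exists>r>0. \<forall>w. gdist n N u w \<le> r \<longrightarrow>
         (\<exists>p. (\<forall>x\<in>V. \<bar>p x - p\<sigma> x\<bar> \<le> \<rho>) \<and> (\<forall>c\<in>V. F w p c = F u p\<sigma> c))) \<and>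
      (\<forall>x\<in>actions. \<forall>w p q. near u \<rho> w p q \<longrightarrow> \<bar>U w (fst x) (snd x) p - U u (fst x) (snd x) q\<bar> < \<gamma>) \<and>
      (\<forall>x\<in>V. 1 * \<rho> < p\<sigma> x)" (is "\<forall>\<^sub>F \<rho> in _. ?solvable \<rho> \<and> ?close \<rho> \<and> ?below \<rho>")
    unfolding actions_def
    by (intro eventually_conj eventually_char_fun_solvable[OF nondeg] eventually_ball_finite ballI
        eventually_util_against_close \<open>0 < \<gamma>\<close> eventually_at_right_0_below_finite finite_var_index p\<sigma>_pos)
      auto
  then obtain \<rho> where "0 < \<rho>" and "?solvable \<rho>" and close: "?close \<rho>" and below: "?below \<rho>"
    by (rule eventually_at_right_0_witness) blast
  then obtain r where "0 < r" and solvable: "\<forall>w. gdist n N u w \<le> r \<longrightarrow>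
      (\<exists>p. (\<forall>x\<in>V. \<bar>p x - p\<sigma> x\<bar> \<le> \<rho>) \<and> (\<forall>c\<in>V. F w p c = F u p\<sigma> c))"
    by blast
  show ?thesis
  proof (intro exI[of _ "min r \<rho>"] conjI allI impI)
    show "0 < min r \<rho>" using \<open>0 < r\<close> \<open>0 < \<rho>\<close> by simp
    fix w assume w: "gdist n N u w < min r \<rho>"
    then obtain p where p: "\<forall>x\<in>V. \<bar>p x - p\<sigma> x\<bar> \<le> \<rho>" and solves: "\<forall>c\<in>V. F w p c = F u p\<sigma> c"
      using solvable by force
    have "near u \<rho> w p p\<sigma>" unfolding near_def using w p p\<sigma>_abs_le_1 by auto
    then have U_close: "\<bar>U w i a p - U u i a p\<sigma>\<bar> < \<gamma>" if "i < n" "a < N i" for i a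
      using close that unfolding actions_def by force
    have pos: "\<forall>x\<in>V. 0 < p x"
      using p below by (fastforce simp: abs_le_iff)
    obtain \<tau> where "nash n N w \<tau>" "\<forall>i<n. support N \<tau> i = S i"
      and "\<forall>i<n. \<bar>eu n N w \<tau> i - eu n N u \<sigma> i\<bar> < \<gamma>"
      using nash_near_of_char_fun_solution[OF nash gap U_close pos solves] by blast
    then show "\<exists>\<tau>. nash n N w \<tau> \<and> (\<forall>i<n. support N \<tau> i = S i) \<and>
        (\<forall>i<n. \<bar>eu n N w \<tau> i - eu n N u \<sigma> i\<bar> < \<epsilon>)"
      using \<open>\<gamma> < \<epsilon>\<close> by (blast intro: less_trans)
  qed
qed

definition punishing_equilibrium :: "real \<Rightarrow> game \<Rightarrow> game \<Rightarrow> bool" where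
  "punishing_equilibrium \<epsilon> w u' \<longleftrightarrow> (\<exists>\<tau>. nash n N u' \<tau> \<and> (\<forall>i<n. support N \<tau> i = S i) \<and>
     (\<forall>i<n. eu n N u' \<tau> i - eu n N w \<sigma> i < \<epsilon>))"

lemma punishing_radius:
  assumes "nash n N u \<sigma>" and "non_degenerate n N u \<sigma>" and "0 < \<epsilon>"
  shows "\<exists>r>0. \<forall>w u'. gdist n N u w < r \<longrightarrow> gdist n N u u' < r \<longrightarrow> punishing_equilibrium \<epsilon> w u'"
proof -
  obtain r where "0 < r" and r: "\<forall>u'. gdist n N u u' < r \<longrightarrow> (\<exists>\<tau>. nash n N u' \<tau> \<and>
      (\<forall>i<n. support N \<tau> i = S i) \<and> (\<forall>i<n. \<bar>eu n N u' \<tau> i - eu n N u \<sigma> i\<bar> < \<epsilon> / 2))"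
    using local_punishment[OF assms(1,2) half_gt_zero[OF assms(3)]] by blast
  define K where "K = real (card (profiles n N)) + 1"
  have "0 < K" unfolding K_def by simp
  show ?thesis
  proof (intro exI[of _ "min r (\<epsilon> / (2 * K))"] conjI allI impI)
    show "0 < min r (\<epsilon> / (2 * K))" using \<open>0 < r\<close> \<open>0 < K\<close> assms(3) by simp
    fix w u' assume w: "gdist n N u w < min r (\<epsilon> / (2 * K))"
      and u': "gdist n N u u' < min r (\<epsilon> / (2 * K))"
    have w_payoff: "\<bar>eu n N w \<sigma> i - eu n N u \<sigma> i\<bar> < \<epsilon> / 2" if "i < n" for i
    proof -
      have "\<bar>eu n N w \<sigma> i - eu n N u \<sigma> i\<bar> \<le> card (profiles n N) * gdist n N u w"
        by (rule eu_diff_le_gdist[OF that])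
      also have "\<dots> \<le> card (profiles n N) * (\<epsilon> / (2 * K))"
        using w by (intro mult_left_mono) auto
      also have "\<dots> < \<epsilon> / 2"
        using assms(3) by (simp add: K_def field_simps)
      finally show ?thesis .
    qed
    obtain \<tau> where \<tau>: "nash n N u' \<tau>" "\<forall>i<n. support N \<tau> i = S i"
      and \<tau>_payoff: "\<forall>i<n. \<bar>eu n N u' \<tau> i - eu n N u \<sigma> i\<bar> < \<epsilon> / 2"
      using r u' by auto
    have "eu n N u' \<tau> i - eu n N w \<sigma> i < \<epsilon>" if "i < n" for i
      using w_payoff[OF that] \<tau>_payoff[rule_format, OF that] by linarith
    then show "punishing_equilibrium \<epsilon> w u'"
      unfolding punishing_equilibrium_def using \<tau> by blast
  qed
qed

end

theorem lemma2:
  fixes n :: nat and N :: "nat \<Rightarrow> nat" and \<sigma> :: mixed and C :: "game set"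
  assumes "1 \<le> n"
    and "\<forall>i<n. 1 \<le> N i"
    and "mixed_profile n N \<sigma>"
    and "C \<subseteq> games n N"
    and "compactin (Metric_space.mtopology (games n N) (gdist n N)) C"
    and "\<forall>u\<in>C. nash n N u \<sigma> \<and> non_degenerate n N u \<sigma>"
  shows "\<forall>\<epsilon>>0. \<exists>\<delta>>0. \<forall>u\<in>C. strongly_punishable n N u \<sigma> \<epsilon> \<delta>"
proof (intro allI impI)
  fix \<epsilon> :: real assume "0 < \<epsilon>"
  interpret fixed_profile n N \<sigma> by unfold_locales (rule assms(3))
  interpret games: Metric_space "games n N" "gdist n N" by (rule games_Metric_space[OF assms(1,2)])
  obtain R where R: "\<And>u. u \<in> C \<Longrightarrow> 0 < R u" and punish: "\<And>u w u'. u \<in> C \<Longrightarrow>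
      gdist n N u w < R u \<Longrightarrow> gdist n N u u' < R u \<Longrightarrow> punishing_equilibrium \<epsilon> w u'"
    using punishing_radius[OF _ _ \<open>0 < \<epsilon>\<close>] assms(6) by metis
  obtain \<delta> where "0 < \<delta>" and \<delta>: "\<And>w. w \<in> C \<Longrightarrow> \<exists>u\<in>C. gdist n N u w + \<delta> < R u"
    using games.compactin_uniform_radius[where R = R, OF assms(5) R] by blast
  have "strongly_punishable n N w \<sigma> \<epsilon> \<delta>" if "w \<in> C" for w
    unfolding strongly_punishable_def punishing_equilibrium_def[symmetric]
  proof (intro conjI ballI impI)
    show "nash n N w \<sigma>" using assms(6) \<open>w \<in> C\<close> by blast
    fix u' assume "u' \<in> games n N" and "gdist n N w u' < \<delta>"
    obtain u where "u \<in> C" and u: "gdist n N u w + \<delta> < R u" using \<delta> \<open>w \<in> C\<close> by blast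
    have "gdist n N u u' \<le> gdist n N u w + gdist n N w u'"
      using assms(4) \<open>u \<in> C\<close> \<open>w \<in> C\<close> \<open>u' \<in> games n N\<close> by (intro games.triangle) auto
    then show "punishing_equilibrium \<epsilon> w u'"
      using punish[OF \<open>u \<in> C\<close>] u \<open>0 < \<delta>\<close> \<open>gdist n N w u' < \<delta>\<close> by auto
  qed
  then show "\<exists>\<delta>>0. \<forall>u\<in>C. strongly_punishable n N u \<sigma> \<epsilon> \<delta>" using \<open>0 < \<delta>\<close> by blast
qed

end
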